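(* Let $B$ be a zero-sum sequence over $C_2^5$ and let $k \in [2,5]$. Then $\max\mathsf{L}(B)=k$ and $|B|= \mathsf{D}_{k}(C_2^5)$ if and only if all of the following hold: $|B|=4+3k$, $B$ is squarefree, $0$ does not occur in $B$, and there exist terms $g_1,\dots, g_{k-2}$ of $B$ (with $g_1\cdots g_{k-2}$ a subsequence of $B$) and a subgroup $H$ of index $2$ in $C_2^5$ such that every term of the sequence obtained from $B$ by removing $g_1,\dots,g_{k-2}$ lies in the non-zero coset $C_2^5\setminus H$.
   Context: $C_2^5$ is the elementary abelian $2$-group of rank $5$. A sequence is a finite unordered list of group elements with repetitions; squarefree means no repetitions; zero-sum means its terms sum to $0$; a minimal zero-sum sequence is a non-empty zero-sum sequence with no proper non-empty zero-sum subsequence; for a zero-sum sequence $B$, $\mathsf{L}(B)$ is the set of all $t$ such that $B$ is a product of $t$ minimal zero-sum sequences. $\mathsf{D}_k(G)$ is the smallest $\ell$ such that every sequence over $G$ of length at least $\ell$ has $k$ disjoint non-empty zero-sum subsequences. $[a,b]$ is the set of integers from $a$ to $b$. *)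

theory Defs
  imports "HOL-Analysis.Analysis" "HOL-Library.Multiset" "HOL-Library.Numeral_Type"
begin

text \<open>The elementary abelian 2-group of rank 5, as vectors of length 5 over
  the integers mod 2 (type 2), with componentwise addition.\<close>
type_synonym C2_5 = "2 ^ 5"

text \<open>Sequences over a finite abelian group are finite multisets.\<close>

definition zero_sum :: "'a::comm_monoid_add multiset \<Rightarrow> bool" where
  "zero_sum S \<longleftrightarrow> sum_mset S = 0"

definition minimal_zero_sum :: "'a::comm_monoid_add multiset \<Rightarrow> bool" where
  "minimal_zero_sum S \<longleftrightarrow> S \<noteq> {#} \<and> zero_sum S \<and>
     (\<forall>T. T \<subseteq># S \<and> T \<noteq> {#} \<and> zero_sum T \<longrightarrow> T = S)"

definition lengths :: "'a::comm_monoid_add multiset \<Rightarrow> nat set" where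
  "lengths B = {t. \<exists>F :: 'a multiset multiset. size F = t \<and>
                     (\<forall>A \<in># F. minimal_zero_sum A) \<and> sum_mset F = B}"

definition squarefree_seq :: "'a multiset \<Rightarrow> bool" where
  "squarefree_seq S \<longleftrightarrow> (\<forall>g. count S g \<le> 1)"

definition has_disjoint_zs :: "'a::comm_monoid_add multiset \<Rightarrow> nat \<Rightarrow> bool" where
  "has_disjoint_zs S k \<longleftrightarrow> (\<exists>F :: 'a multiset multiset. size F = k \<and>
      (\<forall>A \<in># F. A \<noteq> {#} \<and> zero_sum A) \<and> sum_mset F \<subseteq># S)"

definition Davenport_k :: "('a::comm_monoid_add) itself \<Rightarrow> nat \<Rightarrow> nat" where
  "Davenport_k (_ :: 'a itself) k =
     (LEAST l. \<forall>S :: 'a multiset. size S \<ge> l \<longrightarrow> has_disjoint_zs S k)"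

definition is_subgroup :: "'a::ab_group_add set \<Rightarrow> bool" where
  "is_subgroup H \<longleftrightarrow> 0 \<in> H \<and> (\<forall>x\<in>H. \<forall>y\<in>H. x + y \<in> H) \<and> (\<forall>x\<in>H. - x \<in> H)"

definition subgroup_index2 :: "'a::{ab_group_add,finite} set \<Rightarrow> bool" where
  "subgroup_index2 H \<longleftrightarrow> is_subgroup H \<and> card (UNIV :: 'a set) = 2 * card H"

end

theory Submission
  imports Defs
begin

text \<open>For \<open>|B| = \<D>\<^sub>k = 3k + 4\<close> the sequence \<open>B\<close> has \<open>k\<close> disjoint zero-sum subsequences, and
  refining them (plus the zero-sum remainder) into minimal ones gives a factorization of length
  at least \<open>k\<close>; hence \<open>max \<L>(B) = k\<close> says exactly that \<open>B\<close> has no \<open>k + 1\<close> disjoint zero-sum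
  subsequences.

  The bound \<open>\<D>\<^sub>k \<le> 3k + 4\<close> comes from removing zero-sum subsequences of length at most 3;
  once none is left the support is a sum-free set, and a Fourier argument shows that a sum-free
  set of at least 11 elements lies in the nonzero coset of a subgroup \<open>H\<close> of index 2, where
  zero-sum quadruples \<open>{u, u + d, w, w + d}\<close> with \<open>d \<in> H\<close> abound.

  Conversely, count each term in \<open>H\<close> twice: every nonempty zero-sum subsequence of a squarefree
  sequence avoiding \<open>0\<close> then has weight at least 4. This rules out \<open>k + 1\<close> disjoint zero-sum
  subsequences when at most \<open>k - 2\<close> terms lie in \<open>H\<close>, which gives both the lower bound for
  \<open>\<D>\<^sub>k\<close> and sufficiency. Necessity is proved by induction on \<open>k\<close>, removing a zero-sum triple.\<close>

section \<open>Elementary abelian 2-groups and subgroups of index 2\<close>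

lemma mod2_cases: "(a::2) = 0 \<or> a = 1"
proof (induct a)
  case (of_int z)
  then have "z = 0 \<or> z = 1" by auto
  then show ?case by auto
qed

lemma mod2_add_self [simp]: "(a::2) + a = 0"
  using mod2_cases[of a] by auto

lemma vec_mod2_add_self [simp]: "(x :: 2 ^ 'n) + x = 0"
  unfolding vec_eq_iff by (metis mod2_add_self vector_add_component zero_index)

lemma vec_mod2_add_self_left [simp]: "x + (x + y) = (y :: 2 ^ 'n)"
  by (metis vec_mod2_add_self add.assoc add.left_neutral)

lemma vec_mod2_mult_2 [simp]: "2 * (x :: 2 ^ 'n) = 0"
  by (metis mult_2 vec_mod2_add_self)

lemma vec_mod2_minus [simp]: "- (x :: 2 ^ 'n) = x"
  by (metis vec_mod2_add_self add.inverse_unique)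

lemma vec_mod2_add_eq_0_iff: "(x :: 2 ^ 'n) + y = 0 \<longleftrightarrow> x = y"
  by (metis vec_mod2_add_self_left add.right_neutral)

lemma vec_mod2_add_eq_iff: "(x :: 2 ^ 'n) + y = z \<longleftrightarrow> x = z + y"
  by auto

context
  fixes H :: "'a::{ab_group_add,finite} set"
  assumes H: "subgroup_index2 H"
begin

lemma subgroup_index2_zero: "0 \<in> H"
  using H unfolding subgroup_index2_def is_subgroup_def by simp

lemma subgroup_index2_add: "x \<in> H \<Longrightarrow> y \<in> H \<Longrightarrow> x + y \<in> H"
  using H unfolding subgroup_index2_def is_subgroup_def by simp

lemma subgroup_index2_minus_iff: "- x \<in> H \<longleftrightarrow> x \<in> H"
proof -
  have "\<forall>x\<in>H. - x \<in> H" using H unfolding subgroup_index2_def is_subgroup_def by simp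
  then show ?thesis by (metis minus_minus)
qed

lemma subgroup_index2_card_compl: "card (UNIV - H) = card H"
  using H unfolding subgroup_index2_def by (simp add: card_Diff_subset)

lemma subgroup_index2_add_in_out:
  assumes "x \<in> H" "y \<notin> H"
  shows "x + y \<notin> H"
proof
  assume "x + y \<in> H"
  moreover have "- x \<in> H" using assms(1) subgroup_index2_minus_iff by simp
  ultimately have "- x + (x + y) \<in> H" using subgroup_index2_add by blast
  then show False using assms(2) by simp
qed

lemma subgroup_index2_add_out_out:
  assumes "x \<notin> H" "y \<notin> H"
  shows "x + y \<in> H"
proof -
  have "h - x \<notin> H" if "h \<in> H" for h
  proof -
    have "h + - x \<notin> H"
      using subgroup_index2_add_in_out[OF that] subgroup_index2_minus_iff assms(1) by blast
    then show ?thesis by simp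
  qed
  then have "(\<lambda>h. h - x) ` H \<subseteq> UNIV - H" by blast
  moreover have "card ((\<lambda>h. h - x) ` H) = card (UNIV - H)"
    by (simp add: card_image inj_on_def subgroup_index2_card_compl)
  ultimately have "(\<lambda>h. h - x) ` H = UNIV - H"
    by (simp add: card_subset_eq)
  then obtain h where "h \<in> H" "y = h - x" using assms(2) by blast
  then show ?thesis by simp
qed

lemma subgroup_index2_add_iff: "x + y \<in> H \<longleftrightarrow> (x \<in> H \<longleftrightarrow> y \<in> H)"
  using subgroup_index2_add subgroup_index2_add_in_out[of x y] subgroup_index2_add_in_out[of y x]
    subgroup_index2_add_out_out[of x y]
  by (cases "x \<in> H"; cases "y \<in> H") (simp_all add: add.commute)

lemma subgroup_index2_sum_mset_iff:
  "sum_mset Z \<in> H \<longleftrightarrow> even (size (filter_mset (\<lambda>g. g \<notin> H) Z))"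
  by (induct Z) (auto simp: subgroup_index2_zero subgroup_index2_add_iff)

lemma subgroup_index2_sum_iff:
  "finite A \<Longrightarrow> sum id A \<in> H \<longleftrightarrow> even (card (A - H))"
  using subgroup_index2_sum_mset_iff[of "mset_set A"]
  by (simp add: sum_unfold_sum_mset filter_mset_mset_set set_diff_eq)

end

lemma sum_translation_closed:
  fixes d :: "2 ^ 'n"
  assumes "d \<noteq> 0" "finite X" "card X = 2 * n" "\<forall>x\<in>X. x + d \<in> X"
  shows "sum id X = (if even n then 0 else d)"
  using assms(2-)
proof (induct n arbitrary: X)
  case 0
  then show ?case by simp
next
  case (Suc n X)
  obtain x where x: "x \<in> X" using Suc.prems(2) by fastforce
  have pair: "{x, x + d} \<subseteq> X" "x + d \<noteq> x" using Suc.prems(3) x assms(1) by auto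
  define X' where "X' = X - {x, x + d}"
  have "card X' = 2 * n"
    unfolding X'_def using Suc.prems(1,2) pair by (simp add: card_Diff_subset)
  moreover have "\<forall>y\<in>X'. y + d \<in> X'"
    using Suc.prems(3) unfolding X'_def by (auto simp: vec_mod2_add_eq_iff)
  ultimately have IH: "sum id X' = (if even n then 0 else d)"
    using Suc.hyps[of X'] Suc.prems(1) unfolding X'_def by simp
  have "sum id X = sum id X' + sum id {x, x + d}"
    unfolding X'_def using sum.subset_diff[OF pair(1) Suc.prems(1)] by simp
  also have "sum id {x, x + d} = d" using pair(2) by (simp add: add.assoc[symmetric])
  finally show ?case using IH by simp
qed

context
  fixes H :: "C2_5 set"
  assumes H: "subgroup_index2 H"
begin

lemma subgroup_index2_card: "card H = 16"
  using H unfolding subgroup_index2_def by simp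

lemma subgroup_index2_card_coset: "card (UNIV - H) = 16"
  using subgroup_index2_card subgroup_index2_card_compl[OF H] by simp

lemma subgroup_index2_obtain_nonzero:
  obtains d where "d \<in> H" "d \<noteq> 0"
proof -
  have "card (H - {0}) = 15" using subgroup_index2_card subgroup_index2_zero[OF H] by simp
  then have "H - {0} \<noteq> {}" by (metis card.empty zero_neq_numeral)
  then show ?thesis using that by blast
qed

lemma subgroup_index2_coset_sum: "sum id (UNIV - H) = 0"
proof -
  obtain d where d: "d \<in> H" "d \<noteq> 0" using subgroup_index2_obtain_nonzero .
  have "\<forall>x\<in>UNIV - H. x + d \<in> UNIV - H"
    using subgroup_index2_add_iff[OF H] d(1) by blast
  then show ?thesis
    using sum_translation_closed[OF d(2), of "UNIV - H" 8] subgroup_index2_card_coset by simp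
qed

end

section \<open>Disjoint zero-sum subsequences and lengths\<close>

lemma zero_sum_sum_mset: "\<forall>A\<in>#F. zero_sum A \<Longrightarrow> zero_sum (sum_mset F)"
  by (induct F) (simp_all add: zero_sum_def)

lemma zero_sum_diff:
  fixes A B :: "'a::comm_monoid_add multiset"
  assumes "zero_sum B" "A \<subseteq># B" "zero_sum A"
  shows "zero_sum (B - A)"
proof -
  have "sum_mset B = sum_mset A + sum_mset (B - A)"
    using assms(2) by (metis subset_mset.add_diff_inverse sum_mset.union)
  then show ?thesis using assms(1,3) unfolding zero_sum_def by simp
qed

lemma zero_sum_mset_set_iff: "finite F \<Longrightarrow> zero_sum (mset_set F) \<longleftrightarrow> sum id F = 0"
  unfolding zero_sum_def by (simp add: sum_unfold_sum_mset)

lemma squarefree_seq_mset_set: "squarefree_seq (mset_set F)"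
  unfolding squarefree_seq_def by (simp add: count_mset_set')

lemma squarefree_seq_mset_set_set_mset:
  assumes "squarefree_seq B"
  shows "mset_set (set_mset B) = B"
proof (rule multiset_eqI)
  fix x
  have "count B x \<le> 1" using assms unfolding squarefree_seq_def by blast
  then show "count (mset_set (set_mset B)) x = count B x"
    by (cases "count B x = 0") (auto simp: count_mset_set' count_eq_zero_iff intro: le_antisym)
qed

lemma squarefree_seq_subset: "squarefree_seq B \<Longrightarrow> A \<subseteq># B \<Longrightarrow> squarefree_seq A"
  unfolding squarefree_seq_def by (meson mset_subset_eq_count order_trans)

lemma exists_submset_size: "n \<le> size M \<Longrightarrow> \<exists>N. N \<subseteq># M \<and> size N = n"
proof (induct M arbitrary: n)
  case empty
  then show ?case by simp
next
  case (add x M)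
  show ?case
  proof (cases "n \<le> size M")
    case True
    then obtain N where "N \<subseteq># M" "size N = n" using add.hyps by blast
    moreover have "M \<subseteq># add_mset x M" by simp
    ultimately show ?thesis using subset_mset.order_trans by blast
  next
    case False
    then have "n = size (add_mset x M)" using add.prems by simp
    then show ?thesis by blast
  qed
qed

lemma mset_subset_eq_sum_mset:
  assumes "Z \<in># F"
  shows "Z \<subseteq># sum_mset F"
proof -
  have "sum_mset F = Z + sum_mset (F - {#Z#})"
    using arg_cong[OF insert_DiffM[OF assms], of sum_mset] by simp
  then show ?thesis by simp
qed

lemma size_sum_mset_ge: "\<forall>A\<in>#F. A \<noteq> {#} \<Longrightarrow> size F \<le> size (sum_mset F)"
  by (induct F) (auto simp: Suc_leI nonempty_has_size)

lemma has_disjoint_zs_0: "has_disjoint_zs S 0"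
  unfolding has_disjoint_zs_def by (rule exI[of _ "{#}"]) simp

lemma has_disjoint_zs_Suc:
  assumes "A \<subseteq># S" "A \<noteq> {#}" "zero_sum A" "has_disjoint_zs (S - A) k"
  shows "has_disjoint_zs S (Suc k)"
proof -
  obtain F where F: "size F = k" "\<forall>A\<in>#F. A \<noteq> {#} \<and> zero_sum A" "sum_mset F \<subseteq># S - A"
    using assms(4) unfolding has_disjoint_zs_def by blast
  have "A + sum_mset F \<subseteq># A + (S - A)" using F(3) by simp
  then have "sum_mset (add_mset A F) \<subseteq># S"
    using assms(1) by (simp add: subset_mset.add_diff_inverse)
  moreover have "\<forall>A'\<in>#add_mset A F. A' \<noteq> {#} \<and> zero_sum A'" using F(2) assms(2,3) by simp
  moreover have "size (add_mset A F) = Suc k" using F(1) by simp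
  ultimately show ?thesis unfolding has_disjoint_zs_def by blast
qed

lemma has_disjoint_zs_1: "B \<noteq> {#} \<Longrightarrow> zero_sum B \<Longrightarrow> has_disjoint_zs B 1"
  using has_disjoint_zs_Suc[of B B 0] has_disjoint_zs_0[of "{#}"] by simp

lemma has_disjoint_zs_mono: "S \<subseteq># S' \<Longrightarrow> has_disjoint_zs S k \<Longrightarrow> has_disjoint_zs S' k"
  unfolding has_disjoint_zs_def using subset_mset.order_trans by blast

lemma has_disjoint_zs_le:
  assumes "has_disjoint_zs S k" "j \<le> k"
  shows "has_disjoint_zs S j"
proof -
  obtain F where F: "size F = k" "\<forall>A\<in>#F. A \<noteq> {#} \<and> zero_sum A" "sum_mset F \<subseteq># S"
    using assms(1) unfolding has_disjoint_zs_def by blast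
  obtain F' where F': "F' \<subseteq># F" "size F' = j" using exists_submset_size[of j F] F(1) assms(2) by auto
  obtain D where D: "F = F' + D" using F'(1) by (metis subset_mset.le_iff_add)
  have "sum_mset F' \<subseteq># sum_mset F" unfolding D by simp
  then have "sum_mset F' \<subseteq># S" using F(3) by (rule subset_mset.order_trans)
  moreover have "\<forall>A\<in>#F'. A \<noteq> {#} \<and> zero_sum A" using F(2) unfolding D by simp
  ultimately show ?thesis unfolding has_disjoint_zs_def using F'(2) by blast
qed

text \<open>The terms left over, among them \<open>g\<close>, form one more nonempty zero-sum block.\<close>
lemma has_disjoint_zs_add_term:
  assumes B: "zero_sum B" and g: "g \<in># B" and d: "has_disjoint_zs (B - {#g#}) k"
  shows "has_disjoint_zs B (Suc k)"
proof -
  obtain F where F: "size F = k" "\<forall>A\<in>#F. A \<noteq> {#} \<and> zero_sum A" "sum_mset F \<subseteq># B - {#g#}"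
    using d unfolding has_disjoint_zs_def by blast
  define R where "R = B - sum_mset F"
  have sub: "sum_mset F \<subseteq># B" using F(3) by (meson diff_subset_eq_self subset_mset.order_trans)
  have "zero_sum R" unfolding R_def using zero_sum_diff[OF B sub] zero_sum_sum_mset F(2) by blast
  moreover have "g \<in># R"
  proof -
    have "count (sum_mset F) g \<le> count (B - {#g#}) g" using F(3) by (rule mset_subset_eq_count)
    moreover have "count (B - {#g#}) g < count B g" using g by simp
    ultimately show ?thesis unfolding R_def in_diff_count by linarith
  qed
  ultimately have "\<forall>A\<in>#add_mset R F. A \<noteq> {#} \<and> zero_sum A" using F(2) by auto
  moreover have "sum_mset (add_mset R F) = B" unfolding R_def using sub by simp
  moreover have "size (add_mset R F) = Suc k" using F(1) by simp
  ultimately show ?thesis unfolding has_disjoint_zs_def by (metis subset_mset.order_refl)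
qed

lemma has_disjoint_zs_mset_set_Suc:
  assumes "finite S" "F \<subseteq> S" "F \<noteq> {}" "sum id F = 0" "has_disjoint_zs (mset_set (S - F)) k"
  shows "has_disjoint_zs (mset_set S) (Suc k)"
proof (rule has_disjoint_zs_Suc)
  have "finite F" using assms(1,2) finite_subset by blast
  then show "mset_set F \<subseteq># mset_set S" "mset_set F \<noteq> {#}" "zero_sum (mset_set F)"
    using assms by (simp_all add: mset_set_empty_iff zero_sum_mset_set_iff)
  show "has_disjoint_zs (mset_set S - mset_set F) k" using assms(5) mset_set_Diff[OF assms(1,2)] by simp
qed

lemma has_disjoint_zs_mset_set_mono:
  "finite S \<Longrightarrow> T \<subseteq> S \<Longrightarrow> has_disjoint_zs (mset_set T) k \<Longrightarrow> has_disjoint_zs (mset_set S) k"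
  using has_disjoint_zs_mono subset_imp_msubset_mset_set by blast

lemma lengths_le_size: "t \<in> lengths B \<Longrightarrow> t \<le> size B"
  unfolding lengths_def minimal_zero_sum_def using size_sum_mset_ge by fastforce

lemma finite_lengths: "finite (lengths B)"
  using lengths_le_size by (meson finite_atMost finite_subset subsetI atMost_iff)

lemma has_disjoint_zs_if_lengths: "t \<in> lengths B \<Longrightarrow> has_disjoint_zs B t"
  unfolding lengths_def has_disjoint_zs_def minimal_zero_sum_def by fastforce

lemma zero_sum_factorization:
  fixes A :: "'a::comm_monoid_add multiset"
  shows "zero_sum A \<Longrightarrow> \<exists>F. (\<forall>Z\<in>#F. minimal_zero_sum Z) \<and> sum_mset F = A"
proof (induct "size A" arbitrary: A rule: less_induct)
  case less
  show ?case
  proof (cases "A = {#} \<or> minimal_zero_sum A")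
    case True
    then show ?thesis
    proof
      assume "A = {#}"
      then show ?thesis by (intro exI[of _ "{#}"]) simp
    next
      assume "minimal_zero_sum A"
      then show ?thesis by (intro exI[of _ "{#A#}"]) simp
    qed
  next
    case False
    then obtain T where T: "T \<subseteq># A" "T \<noteq> {#}" "zero_sum T" "T \<noteq> A"
      using less.prems unfolding minimal_zero_sum_def by blast
    have "size T < size A" using T(1,4) by (simp add: mset_subset_size subset_mset.le_neq_trans)
    then obtain F1 where F1: "\<forall>Z\<in>#F1. minimal_zero_sum Z" "sum_mset F1 = T"
      using less.hyps T(3) by blast
    have "size T \<le> size A" "size T > 0" using T(1,2) by (simp_all add: size_mset_mono nonempty_has_size)
    then have "size (A - T) < size A" using T(1) by (simp add: size_Diff_submset)
    then obtain F2 where F2: "\<forall>Z\<in>#F2. minimal_zero_sum Z" "sum_mset F2 = A - T"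
      using less.hyps zero_sum_diff[OF less.prems T(1,3)] by blast
    have "sum_mset (F1 + F2) = A" using F1(2) F2(2) T(1) by simp
    then show ?thesis using F1(1) F2(1) by (metis union_iff)
  qed
qed

lemma zero_sum_blocks_refine:
  fixes F :: "'a::comm_monoid_add multiset multiset"
  shows "\<forall>Z\<in>#F. Z \<noteq> {#} \<and> zero_sum Z \<Longrightarrow>
    \<exists>G. (\<forall>Y\<in>#G. minimal_zero_sum Y) \<and> sum_mset G = sum_mset F \<and> size G \<ge> size F"
proof (induct F)
  case empty
  then show ?case by (intro exI[of _ "{#}"]) simp
next
  case (add Z F)
  then obtain G where G: "\<forall>Y\<in>#G. minimal_zero_sum Y" "sum_mset G = sum_mset F" "size G \<ge> size F"
    by auto
  obtain GZ where GZ: "\<forall>Y\<in>#GZ. minimal_zero_sum Y" "sum_mset GZ = Z"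
    using zero_sum_factorization add.prems by auto
  have "GZ \<noteq> {#}" using GZ(2) add.prems by auto
  then have "size GZ \<ge> 1" by (simp add: Suc_leI nonempty_has_size)
  then show ?case using G GZ by (intro exI[of _ "GZ + G"]) auto
qed

lemma exists_lengths_ge:
  assumes zs: "zero_sum B" and d: "has_disjoint_zs B k"
  shows "\<exists>t\<ge>k. t \<in> lengths B"
proof -
  obtain F where F: "size F = k" "\<forall>A\<in>#F. A \<noteq> {#} \<and> zero_sum A" "sum_mset F \<subseteq># B"
    using d unfolding has_disjoint_zs_def by blast
  define R where "R = B - sum_mset F"
  have "zero_sum R" unfolding R_def using zero_sum_diff[OF zs F(3)] zero_sum_sum_mset F(2) by blast
  then obtain GR where GR: "\<forall>Y\<in>#GR. minimal_zero_sum Y" "sum_mset GR = R"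
    using zero_sum_factorization by blast
  obtain G where G: "\<forall>Y\<in>#G. minimal_zero_sum Y" "sum_mset G = sum_mset F" "size G \<ge> k"
    using zero_sum_blocks_refine[OF F(2)] F(1) by blast
  have "sum_mset (G + GR) = B" using G(2) GR(2) F(3) unfolding R_def by simp
  moreover have "\<forall>Y\<in>#G + GR. minimal_zero_sum Y" using G(1) GR(1) by auto
  ultimately have "size (G + GR) \<in> lengths B" unfolding lengths_def by blast
  moreover have "size (G + GR) \<ge> k" using G(3) by simp
  ultimately show ?thesis by blast
qed

lemma Max_lengths_eq_iff:
  assumes zs: "zero_sum B" and dk: "has_disjoint_zs B k"
  shows "Max (lengths B) = k \<longleftrightarrow> \<not> has_disjoint_zs B (Suc k)"
proof
  assume M: "Max (lengths B) = k"
  show "\<not> has_disjoint_zs B (Suc k)"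
  proof
    assume "has_disjoint_zs B (Suc k)"
    then obtain t where "t \<ge> Suc k" "t \<in> lengths B" using exists_lengths_ge[OF zs] by blast
    then show False using Max_ge[OF finite_lengths, of t B] M by simp
  qed
next
  assume nd: "\<not> has_disjoint_zs B (Suc k)"
  have le: "\<forall>y\<in>lengths B. y \<le> k"
    using nd has_disjoint_zs_le has_disjoint_zs_if_lengths not_less_eq_eq by blast
  moreover obtain t where "t \<ge> k" "t \<in> lengths B" using exists_lengths_ge[OF zs dk] by blast
  ultimately show "Max (lengths B) = k" using Max_eqI[OF finite_lengths] by (metis le_antisym)
qed

section \<open>Characters and sum-free sets\<close>

definition inner_mod2 :: "2 ^ 'n \<Rightarrow> 2 ^ 'n \<Rightarrow> 2" where
  "inner_mod2 c x = (\<Sum>i\<in>UNIV. c $ i * x $ i)"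

definition character :: "2 ^ 'n \<Rightarrow> 2 ^ 'n \<Rightarrow> int" where
  "character c x = (if inner_mod2 c x = 0 then 1 else -1)"

definition hyperplane :: "2 ^ 'n \<Rightarrow> (2 ^ 'n) set" where
  "hyperplane c = {x. inner_mod2 c x = 0}"

lemma inner_mod2_add: "inner_mod2 c (x + y) = inner_mod2 c x + inner_mod2 c y"
  unfolding inner_mod2_def by (simp add: distrib_left sum.distrib)

lemma inner_mod2_zero [simp]: "inner_mod2 c 0 = 0" "inner_mod2 0 x = 0"
  unfolding inner_mod2_def by simp_all

lemma inner_mod2_commute: "inner_mod2 c x = inner_mod2 x c"
  unfolding inner_mod2_def by (simp add: mult.commute)

lemma inner_mod2_axis: "inner_mod2 (axis i 1) x = x $ i"
proof -
  have "\<And>j. axis i (1::2) $ j * x $ j = (if i = j then x $ j else 0)" by (simp add: axis_def)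
  then show ?thesis unfolding inner_mod2_def by simp
qed

lemma inner_mod2_obtain_one:
  assumes "c \<noteq> 0"
  obtains e where "inner_mod2 c e = 1"
proof -
  obtain i where "c $ i \<noteq> 0" using assms by (auto simp: vec_eq_iff)
  then have "c $ i = 1" using mod2_cases[of "c $ i"] by auto
  then have "inner_mod2 c (axis i 1) = 1" by (subst inner_mod2_commute) (simp add: inner_mod2_axis)
  then show ?thesis using that by blast
qed

lemma character_add: "character c (x + y) = character c x * character c y"
  unfolding character_def inner_mod2_add
  using mod2_cases[of "inner_mod2 c x"] mod2_cases[of "inner_mod2 c y"] by auto

text \<open>Orthogonality: for \<open>x \<noteq> 0\<close>, translating \<open>c\<close> by an \<open>e\<close> with \<open>\<langle>x, e\<rangle> = 1\<close> flips the sign of every term.\<close>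
lemma sum_character:
  fixes x :: "2 ^ 'n"
  shows "(\<Sum>c\<in>UNIV. character c x) = (if x = 0 then int CARD(2 ^ 'n) else 0)"
proof (cases "x = 0")
  case True
  then show ?thesis by (simp add: character_def inner_mod2_def)
next
  case False
  obtain e where e: "inner_mod2 x e = 1" using inner_mod2_obtain_one[OF False] by blast
  have flip: "character (c + e) x = - character c x" for c
    using mod2_cases[of "inner_mod2 c x"] e
    by (auto simp: character_def inner_mod2_commute[of _ x] inner_mod2_add)
  have "(\<Sum>c\<in>UNIV. character (c + e) x) = (\<Sum>c\<in>UNIV. character c x)"
    by (rule sum.reindex_bij_witness[where i="\<lambda>c. c + e" and j="\<lambda>c. c + e"]) auto
  then show ?thesis using False by (simp add: flip sum_negf)
qed

lemma hyperplane_subgroup_index2: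
  fixes c :: "2 ^ 'n"
  assumes "c \<noteq> 0"
  shows "subgroup_index2 (hyperplane c)"
proof -
  obtain e where e: "inner_mod2 c e = 1" using inner_mod2_obtain_one[OF assms] by blast
  have "(\<lambda>x. x + e) ` hyperplane c = UNIV - hyperplane c"
  proof
    show "(\<lambda>x. x + e) ` hyperplane c \<subseteq> UNIV - hyperplane c"
      using e by (auto simp: hyperplane_def inner_mod2_add)
    show "UNIV - hyperplane c \<subseteq> (\<lambda>x. x + e) ` hyperplane c"
    proof
      fix y assume "y \<in> UNIV - hyperplane c"
      then have "y + e \<in> hyperplane c"
        using e mod2_cases[of "inner_mod2 c y"] by (auto simp: hyperplane_def inner_mod2_add)
      moreover have "y = (y + e) + e" by simp
      ultimately show "y \<in> (\<lambda>x. x + e) ` hyperplane c" by blast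
    qed
  qed
  moreover have "inj_on (\<lambda>x. x + e) (hyperplane c)" by (auto simp: inj_on_def)
  ultimately have "card (UNIV - hyperplane c) = card (hyperplane c)" by (metis card_image)
  moreover have "card (hyperplane c) \<le> CARD(2 ^ 'n)" by (rule card_mono) simp_all
  ultimately have "CARD(2 ^ 'n) = 2 * card (hyperplane c)"
    using card_Diff_subset[of "hyperplane c" UNIV] by simp
  moreover have "is_subgroup (hyperplane c)"
    unfolding is_subgroup_def hyperplane_def by (simp add: inner_mod2_add)
  ultimately show ?thesis unfolding subgroup_index2_def by simp
qed

definition sumfree :: "'a::ab_group_add set \<Rightarrow> bool" where
  "sumfree S \<longleftrightarrow> 0 \<notin> S \<and> (\<forall>x\<in>S. \<forall>y\<in>S. x \<noteq> y \<longrightarrow> x + y \<notin> S)"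

lemma sumfree_zero_notin: "sumfree S \<Longrightarrow> 0 \<notin> S"
  unfolding sumfree_def by simp

lemma sumfree_add_notin: "sumfree S \<Longrightarrow> x \<in> S \<Longrightarrow> y \<in> S \<Longrightarrow> x \<noteq> y \<Longrightarrow> x + y \<notin> S"
  unfolding sumfree_def by simp

definition fourier_coeff :: "(2 ^ 'n) set \<Rightarrow> 2 ^ 'n \<Rightarrow> int" where
  "fourier_coeff S c = (\<Sum>x\<in>S. character c x)"

lemma fourier_coeff_0: "fourier_coeff S 0 = int (card S)"
  unfolding fourier_coeff_def character_def by simp

lemma fourier_coeff_hyperplane:
  "fourier_coeff S c = int (card (S \<inter> hyperplane c)) - int (card (S - hyperplane c))"
proof -
  have "fourier_coeff S c = sum (character c) (S \<inter> hyperplane c) + sum (character c) (S - hyperplane c)"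
    unfolding fourier_coeff_def by (rule sum.Int_Diff) simp
  also have "sum (character c) (S \<inter> hyperplane c) = (\<Sum>x\<in>S \<inter> hyperplane c. 1)"
    by (rule sum.cong) (auto simp: character_def hyperplane_def)
  also have "sum (character c) (S - hyperplane c) = (\<Sum>x\<in>S - hyperplane c. -1)"
    by (rule sum.cong) (auto simp: character_def hyperplane_def)
  finally show ?thesis by simp
qed

lemma sum_fourier_coeff_square:
  fixes S :: "(2 ^ 'n) set"
  shows "(\<Sum>c\<in>UNIV. (fourier_coeff S c)^2) = int CARD(2 ^ 'n) * int (card S)"
proof -
  have "(\<Sum>c\<in>UNIV. (fourier_coeff S c)^2) = (\<Sum>c\<in>UNIV. \<Sum>x\<in>S. \<Sum>y\<in>S. character c (x + y))"
    unfolding fourier_coeff_def power2_eq_square sum_product character_add ..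
  also have "\<dots> = (\<Sum>x\<in>S. \<Sum>y\<in>S. \<Sum>c\<in>UNIV. character c (x + y))"
    by (simp add: sum.swap[of _ UNIV] sum.swap[of _ UNIV S])
  also have "\<dots> = (\<Sum>x\<in>S. \<Sum>y\<in>S. if x = y then int CARD(2 ^ 'n) else 0)"
    unfolding sum_character by (simp add: vec_mod2_add_eq_0_iff)
  finally show ?thesis by simp
qed

text \<open>In a sum-free set no three terms sum to \<open>0\<close>, so all cubic terms vanish by orthogonality.\<close>
lemma sum_fourier_coeff_cube:
  assumes "sumfree S"
  shows "(\<Sum>c\<in>UNIV. (fourier_coeff S c)^3) = 0"
proof -
  have "(\<Sum>c\<in>UNIV. (fourier_coeff S c)^3)
      = (\<Sum>c\<in>UNIV. \<Sum>x\<in>S. \<Sum>y\<in>S. \<Sum>z\<in>S. character c (z + y + x))"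
    unfolding fourier_coeff_def power3_eq_cube character_add
    by (simp only: sum_distrib_left sum_distrib_right)
  also have "\<dots> = (\<Sum>x\<in>S. \<Sum>y\<in>S. \<Sum>z\<in>S. \<Sum>c\<in>UNIV. character c (z + y + x))"
    by (simp add: sum.swap[of _ UNIV])
  also have "\<dots> = (\<Sum>x\<in>S. \<Sum>y\<in>S. \<Sum>z\<in>S. 0)"
  proof (intro sum.cong refl)
    fix x y z assume xyz: "x \<in> S" "y \<in> S" "z \<in> S"
    have "z + y + x \<noteq> 0"
    proof
      assume "z + y + x = 0"
      then have z: "z = y + x" by (simp add: vec_mod2_add_eq_0_iff add.assoc)
      show False
      proof (cases "x = y")
        case True
        then have "z = 0" using z by simp
        then show False using xyz(3) sumfree_zero_notin[OF assms] by simp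
      next
        case False
        then show False using xyz z sumfree_add_notin[OF assms, of y x] by simp
      qed
    qed
    then show "(\<Sum>c\<in>UNIV. character c (z + y + x)) = 0" unfolding sum_character by simp
  qed
  finally show ?thesis by simp
qed

text \<open>If every hyperplane met \<open>S\<close> in at least three points, every nontrivial Fourier coefficient
  would be at least \<open>6 - |S|\<close>; weighting the cubic identity by this bound contradicts the
  quadratic (Parseval) identity.\<close>
lemma sumfree_exists_sparse_subgroup:
  fixes S :: "C2_5 set"
  assumes sf: "sumfree S" and ne: "S \<noteq> {}"
  shows "\<exists>H. subgroup_index2 H \<and> card (S \<inter> H) \<le> 2"
proof (rule ccontr)
  assume "\<not> ?thesis"
  then have big: "card (S \<inter> hyperplane c) \<ge> 3" if "c \<noteq> 0" for c
    using hyperplane_subgroup_index2[OF that] by force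
  define s where "s = int (card S)"
  define f where "f = fourier_coeff S"
  have s1: "s \<ge> 1" using ne unfolding s_def by (simp add: Suc_leI card_gt_0_iff)
  have "f c \<ge> 6 - s" if "c \<noteq> 0" for c
    using big[OF that] card_Int_Diff[of S "hyperplane c"]
    unfolding f_def fourier_coeff_hyperplane s_def by simp
  then have "(f c)^2 * (f c - (6 - s)) \<ge> 0" if "c \<noteq> 0" for c
    using that by simp
  then have "0 \<le> (\<Sum>c\<in>UNIV - {0}. (f c)^3 - (6 - s) * (f c)^2)"
    by (intro sum_nonneg) (simp add: power2_eq_square power3_eq_cube algebra_simps)
  also have "\<dots> = (\<Sum>c\<in>UNIV - {0}. (f c)^3) - (6 - s) * (\<Sum>c\<in>UNIV - {0}. (f c)^2)"
    by (simp add: sum_subtractf sum_distrib_left)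
  also have "(\<Sum>c\<in>UNIV - {0}. (f c)^3) = - (s^3)"
    using sum.remove[of UNIV 0 "\<lambda>c. (f c)^3"] sum_fourier_coeff_cube[OF sf]
    unfolding f_def s_def by (simp add: fourier_coeff_0)
  also have "(\<Sum>c\<in>UNIV - {0}. (f c)^2) = 32 * s - s^2"
    using sum.remove[of UNIV 0 "\<lambda>c. (f c)^2"] sum_fourier_coeff_square[of S]
    unfolding f_def s_def by (simp add: fourier_coeff_0)
  also have "- (s^3) - (6 - s) * (32 * s - s^2) = - s * (2 * s^2 - 38 * s + 192)"
    by (simp add: power2_eq_square power3_eq_cube algebra_simps)
  finally have "s * (2 * s^2 - 38 * s + 192) \<le> 0" by simp
  moreover have "8 * (2 * s^2 - 38 * s + 192) = (4 * s - 38)^2 + 92"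
    by (simp add: power2_eq_square algebra_simps)
  then have "0 < 8 * (2 * s^2 - 38 * s + 192)" using zero_le_power2[of "4 * s - 38"] by linarith
  then have "2 * s^2 - 38 * s + 192 > 0" by simp
  ultimately show False using s1 by (simp add: mult_le_0_iff)
qed

context
  fixes H :: "C2_5 set"
  assumes H: "subgroup_index2 H"
begin

lemma subgroup_index2_card_le_coset: "S \<subseteq> UNIV - H \<Longrightarrow> card S \<le> 16"
  using card_mono[of "UNIV - H" S] subgroup_index2_card_coset[OF H] by simp

lemma sumfree_translate_Diff_subgroup:
  assumes sf: "sumfree S" and h: "h \<in> S" "h \<in> H"
  shows "(\<lambda>x. x + h) ` (S - H) \<subseteq> (UNIV - H) - (S - H)"
    and "card (S - H) \<le> 8"
proof -
  show sub: "(\<lambda>x. x + h) ` (S - H) \<subseteq> (UNIV - H) - (S - H)"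
  proof
    fix y assume "y \<in> (\<lambda>x. x + h) ` (S - H)"
    then obtain x where x: "x \<in> S - H" "y = x + h" by blast
    have "y \<notin> H" using x subgroup_index2_add_iff[OF H] h(2) by blast
    moreover have "x \<noteq> h" using x h by blast
    then have "y \<notin> S" using x h sumfree_add_notin[OF sf] by blast
    ultimately show "y \<in> (UNIV - H) - (S - H)" by blast
  qed
  have "card ((\<lambda>x. x + h) ` (S - H)) = card (S - H)" by (simp add: card_image inj_on_def)
  moreover have "card ((UNIV - H) - (S - H)) = card (UNIV - H) - card (S - H)"
    by (rule card_Diff_subset) auto
  ultimately show "card (S - H) \<le> 8"
    using card_mono[OF _ sub] subgroup_index2_card_coset[OF H] by simp
qed

lemma sumfree_translate_Diff_subgroup_eq:
  assumes sf: "sumfree S" and h: "h \<in> S" "h \<in> H" and c: "card (S - H) = 8"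
  shows "(\<lambda>x. x + h) ` (S - H) = (UNIV - H) - (S - H)"
proof (rule card_subset_eq)
  have "card ((UNIV - H) - (S - H)) = card (UNIV - H) - card (S - H)"
    by (rule card_Diff_subset) auto
  then show "card ((\<lambda>x. x + h) ` (S - H)) = card ((UNIV - H) - (S - H))"
    using c subgroup_index2_card_coset[OF H] by (simp add: card_image inj_on_def)
qed (use sumfree_translate_Diff_subgroup[OF sf h] in auto)

end

lemma sumfree_in_coset:
  fixes S :: "C2_5 set"
  assumes sf: "sumfree S" and c: "card S \<ge> 11"
  shows "\<exists>H. subgroup_index2 H \<and> S \<subseteq> UNIV - H"
proof -
  obtain H where H: "subgroup_index2 H" and c2: "card (S \<inter> H) \<le> 2"
    using sumfree_exists_sparse_subgroup[OF sf] c by force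
  have "card (S - H) \<ge> 9" using c c2 card_Int_Diff[of S H] by simp
  then have "S \<inter> H = {}" using sumfree_translate_Diff_subgroup(2)[OF H sf] by fastforce
  then show ?thesis using H by blast
qed

text \<open>Two elements \<open>h0, h1\<close> of \<open>S \<inter> H\<close> translate \<open>S - H\<close> onto the same set, so \<open>S - H\<close> is
  closed under translation by \<open>h0 + h1\<close> and its sum vanishes, forcing \<open>h0 + h1 = 0\<close>.\<close>
lemma sumfree_zero_sum_card10_in_coset:
  fixes S :: "C2_5 set"
  assumes sf: "sumfree S" and c: "card S = 10" and s: "sum id S = 0"
  shows "\<exists>H. subgroup_index2 H \<and> S \<subseteq> UNIV - H"
proof -
  obtain H where H: "subgroup_index2 H" and c2: "card (S \<inter> H) \<le> 2"
    using sumfree_exists_sparse_subgroup[OF sf] c by force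
  have ev: "even (card (S - H))"
    using subgroup_index2_sum_iff[OF H, of S] s subgroup_index2_zero[OF H] by simp
  have sp: "card (S \<inter> H) + card (S - H) = 10" using card_Int_Diff[of S H] c by simp
  have "card (S \<inter> H) \<noteq> 2"
  proof
    assume c2': "card (S \<inter> H) = 2"
    then obtain h0 h1 where hh: "S \<inter> H = {h0, h1}" "h0 \<noteq> h1" by (auto simp: card_2_iff)
    have cX: "card (S - H) = 8" using sp c2' by simp
    define d where "d = h0 + h1"
    have d0: "d \<noteq> 0" unfolding d_def using hh by (simp add: vec_mod2_add_eq_0_iff)
    have "h0 \<in> S" "h0 \<in> H" "h1 \<in> S" "h1 \<in> H" using hh by auto
    then have e0: "(\<lambda>x. x + h0) ` (S - H) = (\<lambda>x. x + h1) ` (S - H)"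
      using sumfree_translate_Diff_subgroup_eq[OF H sf _ _ cX] by metis
    have "\<forall>x\<in>S - H. x + d \<in> S - H"
    proof
      fix x assume "x \<in> S - H"
      then obtain x' where "x' \<in> S - H" "x + h0 = x' + h1" using e0 by blast
      then show "x + d \<in> S - H" unfolding d_def by (simp add: vec_mod2_add_eq_iff add.assoc)
    qed
    then have "sum id (S - H) = 0" using sum_translation_closed[OF d0, of "S - H" 4] cX by simp
    moreover have "sum id S = sum id (S \<inter> H) + sum id (S - H)" by (rule sum.Int_Diff) simp
    ultimately have "sum id S = d" using hh unfolding d_def by simp
    then show False using s d0 by simp
  qed
  then have "card (S \<inter> H) = 0" using ev sp c2 by presburger
  then have "S \<inter> H = {}" by simp
  then show ?thesis using H by blast
qed

section \<open>Zero-sum subsets\<close>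

definition has_short_zs :: "'a::comm_monoid_add multiset \<Rightarrow> bool" where
  "has_short_zs B \<longleftrightarrow> (\<exists>A. A \<subseteq># B \<and> A \<noteq> {#} \<and> zero_sum A \<and> size A \<le> 3)"

lemma exists_zs_size_le2:
  fixes B :: "(2 ^ 'n) multiset"
  assumes "0 \<in># B \<or> \<not> squarefree_seq B"
  shows "\<exists>A. A \<subseteq># B \<and> A \<noteq> {#} \<and> zero_sum A \<and> size A \<le> 2"
proof (cases "0 \<in># B")
  case True
  then show ?thesis by (intro exI[of _ "{#0#}"]) (auto simp: zero_sum_def)
next
  case False
  then obtain g where "\<not> count B g \<le> 1" using assms unfolding squarefree_seq_def by blast
  then have "{#g, g#} \<subseteq># B" by (simp add: subseteq_mset_def)
  then show ?thesis by (intro exI[of _ "{#g, g#}"]) (auto simp: zero_sum_def)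
qed

lemma not_has_short_zs_sumfree:
  fixes B :: "(2 ^ 'n) multiset"
  assumes "\<not> has_short_zs B"
  shows "mset_set (set_mset B) = B" "sumfree (set_mset B)"
proof -
  have sq: "squarefree_seq B" and z: "0 \<notin># B"
    using exists_zs_size_le2[of B] assms unfolding has_short_zs_def by fastforce+
  show B: "mset_set (set_mset B) = B" using sq by (rule squarefree_seq_mset_set_set_mset)
  show "sumfree (set_mset B)"
    unfolding sumfree_def
  proof (intro conjI ballI impI)
    show "0 \<notin> set_mset B" using z by simp
    fix x y assume xy: "x \<in># B" "y \<in># B" "x \<noteq> y"
    show "x + y \<notin> set_mset B"
    proof
      assume xyB: "x + y \<in> set_mset B"
      have "x + y \<noteq> x" "x + y \<noteq> y" using xy xyB z by auto
      then have "zero_sum (mset_set {x, y, x + y})"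
        using xy(3) by (simp add: zero_sum_def)
      moreover have "mset_set {x, y, x + y} \<subseteq># B"
        using xy xyB B subset_imp_msubset_mset_set[of "{x, y, x + y}" "set_mset B"] by auto
      moreover have "size (mset_set {x, y, x + y}) \<le> 3" by (simp add: card_insert_le_m1)
      ultimately show False using assms unfolding has_short_zs_def
        by (metis empty_not_add_mset finite_insert finite.emptyI mset_set.insert_remove
            mset_set_empty_iff insert_not_empty)
    qed
  qed
qed

lemma has_disjoint_zs_Suc_if_short:
  assumes "has_short_zs B"
    and "\<And>A. A \<subseteq># B \<Longrightarrow> size B - 3 \<le> size (B - A) \<Longrightarrow> zero_sum A \<Longrightarrow> has_disjoint_zs (B - A) k"
  shows "has_disjoint_zs B (Suc k)"
proof -
  obtain A where A: "A \<subseteq># B" "A \<noteq> {#}" "zero_sum A" "size A \<le> 3"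
    using assms(1) unfolding has_short_zs_def by blast
  then have "size B - 3 \<le> size (B - A)" by (simp add: size_Diff_submset)
  then show ?thesis using has_disjoint_zs_Suc[OF A(1,2,3)] assms(2)[OF A(1) _ A(3)] by blast
qed

lemma card2_eq_insert_sum:
  fixes F :: "(2 ^ 'n) set"
  assumes "card F = 2" "a \<in> F"
  shows "F = {a, a + sum id F}"
proof -
  obtain x y where xy: "F = {x, y}" "x \<noteq> y" using assms(1) by (meson card_2_iff)
  show ?thesis
  proof (cases "a = x")
    case True
    then show ?thesis using xy by simp
  next
    case False
    then have "a = y" using assms(2) xy by blast
    moreover have "y + (x + y) = x" by (simp add: add.commute[of x y])
    ultimately show ?thesis using xy by auto
  qed
qed

text \<open>Among the 36 pairs of a 9-set two have the same (nonzero) sum, and such pairs are disjoint.\<close>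
lemma exists_zero_sum_4_subset:
  fixes S :: "C2_5 set"
  assumes c: "card S \<ge> 9"
  shows "\<exists>F \<subseteq> S. card F = 4 \<and> sum id F = 0"
proof -
  define P where "P = {F. F \<subseteq> S \<and> card F = 2}"
  have "card P = card S choose 2" unfolding P_def by (rule n_subsets) (use c in auto)
  moreover have "card S * (card S - 1) \<ge> 9 * 8" using c by (intro mult_mono) auto
  ultimately have cP: "card P \<ge> 36" by (simp add: choose_two)
  have "sum id F \<noteq> 0" if "F \<in> P" for F
  proof -
    have "card F = 2" using that unfolding P_def by simp
    then obtain a b where "F = {a, b}" "a \<noteq> b" by (meson card_2_iff)
    then show ?thesis by (simp add: vec_mod2_add_eq_0_iff)
  qed
  then have "sum id ` P \<subseteq> UNIV - {0}" by (simp add: image_subset_iff)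
  have "\<not> inj_on (sum id) P"
  proof
    assume "inj_on (sum id) P"
    then have "card P \<le> card (UNIV - {0::C2_5})"
      by (rule card_inj_on_le) (use \<open>sum id ` P \<subseteq> UNIV - {0}\<close> in simp_all)
    then show False using cP by simp
  qed
  then obtain F1 F2 where F: "F1 \<in> P" "F2 \<in> P" "F1 \<noteq> F2" "sum id F1 = sum id F2"
    unfolding inj_on_def by blast
  have c2: "card F1 = 2" "card F2 = 2" using F(1,2) unfolding P_def by simp_all
  have disj: "F1 \<inter> F2 = {}"
  proof (rule ccontr)
    assume "F1 \<inter> F2 \<noteq> {}"
    then obtain a where a: "a \<in> F1" "a \<in> F2" by blast
    have "F1 = {a, a + sum id F1}" by (rule card2_eq_insert_sum[OF c2(1) a(1)])
    moreover have "F2 = {a, a + sum id F1}"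
      unfolding F(4) by (rule card2_eq_insert_sum[OF c2(2) a(2)])
    ultimately have "F1 = F2" by (rule trans[OF _ sym])
    then show False using F(3) by simp
  qed
  have "card (F1 \<union> F2) = 4" using card_Un_disjoint[OF _ _ disj] c2 by simp
  moreover have "sum id (F1 \<union> F2) = 0" using sum.union_disjoint[OF _ _ disj, of id] F(4) by simp
  moreover have "F1 \<union> F2 \<subseteq> S" using F(1,2) unfolding P_def by blast
  ultimately show ?thesis by blast
qed

text \<open>A 6-set has 64 subsets but there are only 32 group elements: two subsets have the same
  sum, and their symmetric difference is zero-sum.\<close>
lemma exists_zero_sum_subset_card_le6:
  fixes S :: "C2_5 set"
  assumes "card S \<ge> 6"
  shows "\<exists>F \<subseteq> S. F \<noteq> {} \<and> sum id F = 0 \<and> card F \<le> 6"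
proof -
  obtain T where T: "T \<subseteq> S" "card T = 6" "finite T" using obtain_subset_with_card_n[OF assms] by blast
  have "\<not> inj_on (sum id) (Pow T)"
  proof
    assume "inj_on (sum id) (Pow T)"
    then have "card (Pow T) \<le> CARD(C2_5)" by (rule card_inj_on_le) simp_all
    then show False using card_Pow[OF T(3)] T(2) by simp
  qed
  then obtain A1 A2 where A: "A1 \<subseteq> T" "A2 \<subseteq> T" "A1 \<noteq> A2" "sum id A1 = sum id A2"
    unfolding inj_on_def by blast
  have fin: "finite A1" "finite A2" using A(1,2) T(3) finite_subset by auto
  define F where "F = (A1 - A2) \<union> (A2 - A1)"
  have "sum id A1 = sum id (A1 - A2) + sum id (A1 \<inter> A2)"
    using sum.Int_Diff[OF fin(1), of id A2] by (simp add: add.commute)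
  moreover have "sum id A2 = sum id (A2 - A1) + sum id (A1 \<inter> A2)"
    using sum.Int_Diff[OF fin(2), of id A1] by (simp add: add.commute Int_commute)
  moreover have "sum id F = sum id (A1 - A2) + sum id (A2 - A1)"
    unfolding F_def by (rule sum.union_disjoint) (use fin in auto)
  ultimately have "sum id F = sum id A1 + sum id A2" by (simp add: ac_simps)
  then have "sum id F = 0" using A(4) by simp
  moreover have "F \<noteq> {}" unfolding F_def using A(3) by blast
  moreover have "F \<subseteq> T" unfolding F_def using A(1,2) by blast
  then have "card F \<le> 6" using card_mono[OF T(3)] T(2) by fastforce
  ultimately show ?thesis using \<open>F \<subseteq> T\<close> T(1) by blast
qed

lemma has_disjoint_zs_translation_closed:
  fixes h :: "2 ^ 'n"
  assumes h: "h \<noteq> 0"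
  shows "finite Y \<Longrightarrow> \<forall>y\<in>Y. y + h \<in> Y \<Longrightarrow> 4 * j \<le> card Y \<Longrightarrow> has_disjoint_zs (mset_set Y) j"
proof (induct j arbitrary: Y)
  case 0
  show ?case by (rule has_disjoint_zs_0)
next
  case (Suc j Y)
  then obtain u where u: "u \<in> Y" by fastforce
  have uh: "u + h \<in> Y" "u + h \<noteq> u" using Suc.prems u h by auto
  then have "card (Y - {u, u + h}) \<ge> 2" using Suc.prems u by (simp add: card_Diff_subset)
  then obtain w where w: "w \<in> Y" "w \<noteq> u" "w \<noteq> u + h" by (metis DiffE card_eq_0_iff empty_iff
        insertCI not_numeral_le_zero ex_in_conv)
  define Q where "Q = {u, u + h, w, w + h}"
  have "w + h \<in> Y" "w + h \<noteq> w" "w + h \<noteq> u" "w + h \<noteq> u + h"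
    using Suc.prems w h by (auto simp: vec_mod2_add_eq_iff)
  then have Q: "card Q = 4" "Q \<subseteq> Y" "sum id Q = 0" "Q \<noteq> {}"
    unfolding Q_def using u uh w by auto
  have "card (Y - Q) \<ge> 4 * j" using Suc.prems Q by (simp add: card_Diff_subset)
  moreover have "\<forall>y\<in>Y - Q. y + h \<in> Y - Q"
    using Suc.prems(2) unfolding Q_def by (auto simp: vec_mod2_add_eq_iff)
  ultimately have "has_disjoint_zs (mset_set (Y - Q)) j" using Suc.hyps Suc.prems(1) by simp
  then show ?case using has_disjoint_zs_mset_set_Suc[OF Suc.prems(1) Q(2,4,3)] by simp
qed

context
  fixes H :: "C2_5 set"
  assumes H: "subgroup_index2 H"
begin

lemma subgroup_index2_coset_has_disjoint_zs: "has_disjoint_zs (mset_set (UNIV - H)) 4"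
proof -
  obtain d where d: "d \<in> H" "d \<noteq> 0" using subgroup_index2_obtain_nonzero[OF H] .
  show ?thesis
    by (rule has_disjoint_zs_translation_closed[OF d(2)])
      (use subgroup_index2_card_coset[OF H] subgroup_index2_add_iff[OF H] d(1) in auto)
qed

text \<open>If \<open>m1 \<noteq> m2\<close> are missing from the coset, then translation by \<open>d = m1 + m2\<close> sends every
  point of \<open>S\<close> leaving \<open>S\<close> to another missing point, and it cannot hit \<open>m1\<close> or \<open>m2\<close>.\<close>
lemma coset_subset_exists_direction:
  assumes S: "S \<subseteq> UNIV - H" and c: "card S \<ge> 13"
  shows "\<exists>d. d \<in> H \<and> d \<noteq> 0 \<and> card {x\<in>S. x + d \<notin> S} \<le> 1"
proof -
  define M where "M = (UNIV - H) - S"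
  have cM: "card M + card S = 16"
    using card_Diff_subset[of S "UNIV - H"] S subgroup_index2_card_le_coset[OF H S]
      subgroup_index2_card_coset[OF H] unfolding M_def by simp
  have out: "x + d \<in> M" if "x \<in> S" "x + d \<notin> S" "d \<in> H" for x d
    using that S subgroup_index2_add_iff[OF H] unfolding M_def by blast
  show ?thesis
  proof (cases "card M \<ge> 2")
    case True
    then obtain N where N: "N \<subseteq> M" "card N = 2" by (meson obtain_subset_with_card_n)
    then obtain m1 m2 where m: "N = {m1, m2}" "m1 \<noteq> m2" by (meson card_2_iff)
    define d where "d = m1 + m2"
    have d: "d \<in> H" "d \<noteq> 0"
      using m N subgroup_index2_add_out_out[OF H] unfolding M_def d_def
      by (auto simp: vec_mod2_add_eq_0_iff)
    have "(\<lambda>x. x + d) ` {x\<in>S. x + d \<notin> S} \<subseteq> M - N"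
    proof
      fix y assume "y \<in> (\<lambda>x. x + d) ` {x\<in>S. x + d \<notin> S}"
      then obtain x where x: "x \<in> S" "x + d \<notin> S" "y = x + d" by blast
      have "x \<noteq> m1" "x \<noteq> m2" using x(1) m N unfolding M_def by auto
      then have "y \<notin> N" using x(3) m unfolding d_def by (auto simp: vec_mod2_add_eq_iff add.assoc)
      then show "y \<in> M - N" using out[OF x(1,2) d(1)] x(3) by blast
    qed
    then have "card {x\<in>S. x + d \<notin> S} \<le> card (M - N)"
      by (metis (no_types, lifting) card_image card_mono finite inj_on_def add_right_cancel)
    also have "\<dots> \<le> 1" using N cM c by (simp add: card_Diff_subset)
    finally show ?thesis using d by blast
  next
    case False
    obtain d where d: "d \<in> H" "d \<noteq> 0" using subgroup_index2_obtain_nonzero[OF H] .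
    have "(\<lambda>x. x + d) ` {x\<in>S. x + d \<notin> S} \<subseteq> M" using out d(1) by blast
    then have "card {x\<in>S. x + d \<notin> S} \<le> card M"
      by (metis (no_types, lifting) card_image card_mono finite inj_on_def add_right_cancel)
    then show ?thesis using d False by auto
  qed
qed

lemma coset_subset_has_disjoint_zs_3:
  assumes S: "S \<subseteq> UNIV - H" and c: "card S \<ge> 13"
  shows "has_disjoint_zs (mset_set S) 3"
proof -
  obtain d where d: "d \<in> H" "d \<noteq> 0" and bad: "card {x\<in>S. x + d \<notin> S} \<le> 1"
    using coset_subset_exists_direction[OF S c] by blast
  define Y where "Y = {x\<in>S. x + d \<in> S}"
  have "card Y + card {x\<in>S. x + d \<notin> S} = card S"
    unfolding Y_def by (subst card_Un_disjoint[symmetric]) (auto intro: arg_cong[where f=card])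
  then have "4 * 3 \<le> card Y" using bad c by linarith
  moreover have "\<forall>y\<in>Y. y + d \<in> Y" unfolding Y_def by simp
  ultimately have "has_disjoint_zs (mset_set Y) 3"
    using has_disjoint_zs_translation_closed[OF d(2)] by simp
  then show ?thesis using has_disjoint_zs_mset_set_mono[of S Y] unfolding Y_def by simp
qed

text \<open>The complement of \<open>S\<close> in the coset has one or two elements and sums to \<open>sum S\<close>, since the
  whole coset sums to \<open>0\<close>.\<close>
lemma coset_subset_sum_nonzero:
  assumes S: "S \<subseteq> UNIV - H" and c: "card S \<ge> 14" "card S \<le> 15"
  shows "sum id S \<noteq> 0"
proof
  assume s0: "sum id S = 0"
  define M where "M = (UNIV - H) - S"
  have cM: "card M = 16 - card S"
    using card_Diff_subset[of S "UNIV - H"] S subgroup_index2_card_coset[OF H] unfolding M_def by simp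
  have "sum id (UNIV - H) = sum id M + sum id S"
    unfolding M_def using sum.subset_diff[OF S, of id] by simp
  then have sM: "sum id M = 0" using subgroup_index2_coset_sum[OF H] s0 by simp
  have zM: "0 \<notin> M" using subgroup_index2_zero[OF H] unfolding M_def by blast
  show False
  proof (cases "card M = 1")
    case True
    then obtain m where "M = {m}" by (auto simp: card_1_singleton_iff)
    then show False using sM zM by simp
  next
    case False
    then have "card M = 2" using cM c by linarith
    then obtain a b where "M = {a, b}" "a \<noteq> b" by (meson card_2_iff)
    then show False using sM by (simp add: vec_mod2_add_eq_0_iff)
  qed
qed

end

lemma exists_zs_size_le6:
  fixes B :: "C2_5 multiset"
  assumes "size B \<ge> 6"
  shows "\<exists>A. A \<subseteq># B \<and> A \<noteq> {#} \<and> zero_sum A \<and> size A \<le> 6"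
proof (cases "0 \<in># B \<or> \<not> squarefree_seq B")
  case True
  then show ?thesis using exists_zs_size_le2[OF True] by fastforce
next
  case False
  then have B: "mset_set (set_mset B) = B" using squarefree_seq_mset_set_set_mset by blast
  have "card (set_mset B) \<ge> 6" using assms arg_cong[OF B, of size] by simp
  then obtain F where F: "F \<subseteq> set_mset B" "F \<noteq> {}" "sum id F = 0" "card F \<le> 6"
    using exists_zero_sum_subset_card_le6 by blast
  have "mset_set F \<subseteq># B"
    using B subset_imp_msubset_mset_set[OF F(1)] by simp
  moreover have "mset_set F \<noteq> {#}" "zero_sum (mset_set F)" "size (mset_set F) \<le> 6"
    using F(2-4) by (simp_all add: zero_sum_mset_set_iff mset_set_empty_iff)
  ultimately show ?thesis by blast
qed

lemma has_disjoint_zs_1_if_size: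
  fixes B :: "C2_5 multiset"
  shows "size B \<ge> 6 \<Longrightarrow> has_disjoint_zs B 1"
  using exists_zs_size_le6 has_disjoint_zs_1 has_disjoint_zs_mono by blast

lemma zero_sum_has_disjoint_zs_2:
  fixes B :: "C2_5 multiset"
  assumes "zero_sum B" "size B \<ge> 7"
  shows "has_disjoint_zs B 2"
proof -
  have "size B \<ge> 6" using assms(2) by simp
  then obtain A where A: "A \<subseteq># B" "A \<noteq> {#}" "zero_sum A" "size A \<le> 6"
    using exists_zs_size_le6 by blast
  then have "size (B - A) \<ge> 1" using assms(2) by (simp add: size_Diff_submset)
  then have "B - A \<noteq> {#}" by auto
  then have "has_disjoint_zs (B - A) 1"
    using has_disjoint_zs_1 zero_sum_diff[OF assms(1) A(1,3)] by blast
  then show ?thesis using has_disjoint_zs_Suc[OF A(1,2,3)] by (simp add: numeral_2_eq_2)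
qed

lemma sumfree_has_disjoint_zs:
  fixes T :: "C2_5 set"
  assumes sf: "sumfree T" and k: "k \<le> 4" and c: "card T \<ge> 3 * k + 7"
  shows "has_disjoint_zs (mset_set T) (Suc k)"
proof -
  consider "k = 0" | "k = 1" | "k = 2" | "k = 3" | "k = 4" using k by linarith
  then show ?thesis
  proof cases
    case 1
    then show ?thesis using has_disjoint_zs_1_if_size[of "mset_set T"] c by simp
  next
    case 2
    obtain Q where Q: "Q \<subseteq> T" "card Q = 4" "sum id Q = 0"
      using exists_zero_sum_4_subset[of T] c 2 by auto
    then have "has_disjoint_zs (mset_set (T - Q)) 1"
      using has_disjoint_zs_1_if_size[of "mset_set (T - Q)"] c 2 by (simp add: card_Diff_subset)
    moreover have "Q \<noteq> {}" using Q(2) by auto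
    ultimately show ?thesis using has_disjoint_zs_mset_set_Suc[OF _ Q(1) _ Q(3)] 2 by simp
  next
    case 3
    then obtain H where "subgroup_index2 H" "T \<subseteq> UNIV - H" using sumfree_in_coset[OF sf] c by auto
    then show ?thesis using coset_subset_has_disjoint_zs_3 c 3 by (simp add: numeral_3_eq_3)
  next
    case 4
    then obtain H where H: "subgroup_index2 H" "T \<subseteq> UNIV - H" using sumfree_in_coset[OF sf] c by auto
    then have "T = UNIV - H"
      using card_subset_eq[OF _ H(2)] subgroup_index2_card_coset[OF H(1)]
        subgroup_index2_card_le_coset[OF H] c 4 by simp
    then show ?thesis using subgroup_index2_coset_has_disjoint_zs[OF H(1)] 4 by simp
  next
    case 5
    then obtain H where "subgroup_index2 H" "T \<subseteq> UNIV - H" using sumfree_in_coset[OF sf] c by auto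
    then have "card T \<le> 16" using subgroup_index2_card_le_coset by blast
    then show ?thesis using c 5 by simp
  qed
qed

text \<open>Greedily remove zero-sum subsequences of length at most 3; once none is left, the support
  is sum-free.\<close>
lemma has_disjoint_zs_if_size:
  fixes S :: "C2_5 multiset"
  shows "k \<le> 5 \<Longrightarrow> 3 * k + 4 \<le> size S \<Longrightarrow> has_disjoint_zs S k"
proof (induct k arbitrary: S)
  case 0
  show ?case by (rule has_disjoint_zs_0)
next
  case (Suc k S)
  show ?case
  proof (cases "has_short_zs S")
    case True
    then show ?thesis
      by (rule has_disjoint_zs_Suc_if_short) (use Suc in auto)
  next
    case False
    note S = not_has_short_zs_sumfree[OF False]
    have "card (set_mset S) \<ge> 3 * k + 7" using Suc.prems(2) arg_cong[OF S(1), of size] by simp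
    then have "has_disjoint_zs (mset_set (set_mset S)) (Suc k)"
      using sumfree_has_disjoint_zs[OF S(2)] Suc.prems(1) by simp
    then show ?thesis by (simp only: S(1))
  qed
qed

lemma sumfree_zero_sum_has_disjoint_zs:
  fixes T :: "C2_5 set"
  assumes sf: "sumfree T" and s: "sum id T = 0" and j: "j \<le> 3" and c: "card T \<ge> 3 * j + 8"
  shows "has_disjoint_zs (mset_set T) (Suc (Suc j))"
proof -
  consider "j = 0" | "j = 1" | "j = 2" | "j = 3" using j by linarith
  then show ?thesis
  proof cases
    case 1
    then show ?thesis using zero_sum_has_disjoint_zs_2[of "mset_set T"] s c
      by (simp add: zero_sum_mset_set_iff numeral_2_eq_2)
  next
    case 2
    obtain Q where Q: "Q \<subseteq> T" "card Q = 4" "sum id Q = 0"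
      using exists_zero_sum_4_subset[of T] c 2 by auto
    have "sum id (T - Q) = 0" using sum.subset_diff[of Q T id] Q(1) s Q(3) by simp
    then have "has_disjoint_zs (mset_set (T - Q)) 2"
      using zero_sum_has_disjoint_zs_2[of "mset_set (T - Q)"] c 2 Q(1,2)
      by (simp add: zero_sum_mset_set_iff card_Diff_subset)
    moreover have "Q \<noteq> {}" using Q(2) by auto
    ultimately show ?thesis using has_disjoint_zs_mset_set_Suc[OF _ Q(1) _ Q(3)] 2
      by (simp add: numeral_2_eq_2)
  next
    case 3
    then obtain H where H: "subgroup_index2 H" "T \<subseteq> UNIV - H" using sumfree_in_coset[OF sf] c by auto
    then have "card T \<le> 16" using subgroup_index2_card_le_coset by blast
    then have "card T = 16" using coset_subset_sum_nonzero[OF H] s c 3 by force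
    then show ?thesis using has_disjoint_zs_if_size[of 4 "mset_set T"] 3 by simp
  next
    case 4
    then obtain H where "subgroup_index2 H" "T \<subseteq> UNIV - H" using sumfree_in_coset[OF sf] c by auto
    then have "card T \<le> 16" using subgroup_index2_card_le_coset by blast
    then show ?thesis using c 4 by simp
  qed
qed

lemma zero_sum_has_disjoint_zs:
  fixes B :: "C2_5 multiset"
  shows "j \<le> 4 \<Longrightarrow> zero_sum B \<Longrightarrow> 3 * j + 5 \<le> size B \<Longrightarrow> has_disjoint_zs B (Suc j)"
proof (induct j arbitrary: B)
  case 0
  then have "B \<noteq> {#}" by auto
  then show ?case using has_disjoint_zs_1 0 by simp
next
  case (Suc j B)
  show ?case
  proof (cases "has_short_zs B")
    case True
    show ?thesis
    proof (rule has_disjoint_zs_Suc_if_short[OF True])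
      fix A assume A: "A \<subseteq># B" "size B - 3 \<le> size (B - A)" "zero_sum A"
      show "has_disjoint_zs (B - A) (Suc j)"
        using Suc.hyps[of "B - A"] Suc.prems zero_sum_diff[OF Suc.prems(2) A(1,3)] A(2) by simp
    qed
  next
    case False
    note B = not_has_short_zs_sumfree[OF False]
    have "card (set_mset B) \<ge> 3 * j + 8" using Suc.prems(3) arg_cong[OF B(1), of size] by simp
    moreover have "sum id (set_mset B) = 0"
      using Suc.prems(2) zero_sum_mset_set_iff[of "set_mset B"] by (simp add: B(1))
    ultimately have "has_disjoint_zs (mset_set (set_mset B)) (Suc (Suc j))"
      using sumfree_zero_sum_has_disjoint_zs[OF B(2)] Suc.prems(1) by simp
    then show ?thesis by (simp only: B(1))
  qed
qed

section \<open>Weights\<close>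

definition weight :: "'a set \<Rightarrow> 'a multiset \<Rightarrow> nat" where
  "weight H Z = size Z + size (filter_mset (\<lambda>g. g \<in> H) Z)"

lemma weight_union: "weight H (A + B) = weight H A + weight H B"
  unfolding weight_def by simp

lemma weight_mono: "A \<subseteq># B \<Longrightarrow> weight H A \<le> weight H B"
  unfolding weight_def by (simp add: add_mono size_mset_mono multiset_filter_mono)

text \<open>A zero-sum sequence has an even number \<open>b\<close> of terms outside \<open>H\<close>; with \<open>a\<close> terms in \<open>H\<close> its
  weight is \<open>2a + b\<close>, and the cases \<open>a + b \<le> 2\<close> with \<open>a \<le> 1\<close> need a zero or a repeated term.\<close>
lemma weight_zero_sum_ge_4:
  fixes H :: "(2 ^ 'n) set"
  assumes H: "subgroup_index2 H" and sq: "squarefree_seq Z" and z: "0 \<notin># Z"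
    and ne: "Z \<noteq> {#}" and zs: "zero_sum Z"
  shows "4 \<le> weight H Z"
proof -
  define a where "a = size (filter_mset (\<lambda>g. g \<in> H) Z)"
  define b where "b = size (filter_mset (\<lambda>g. g \<notin> H) Z)"
  have sz: "size Z = a + b"
    unfolding a_def b_def by (metis multiset_partition size_union)
  have ev: "even b" unfolding b_def
    using subgroup_index2_sum_mset_iff[OF H, of Z] zs subgroup_index2_zero[OF H]
    unfolding zero_sum_def by simp
  have w: "weight H Z = 2 * a + b" unfolding weight_def a_def[symmetric] using sz by simp
  have "size Z \<noteq> 1"
  proof
    assume "size Z = 1"
    then obtain h where "Z = {#h#}" using size_1_singleton_mset by blast
    then show False using zs z unfolding zero_sum_def by simp
  qed
  moreover have "size Z \<noteq> 2"
  proof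
    assume "size Z = 2"
    then obtain u where u: "u \<in># Z" by (metis ne multiset_nonemptyE)
    then have "size (Z - {#u#}) = 1" using \<open>size Z = 2\<close> by (simp add: size_Diff_submset)
    then obtain v where "Z - {#u#} = {#v#}" using size_1_singleton_mset by blast
    then have uv: "Z = {#u, v#}" using insert_DiffM[OF u] by simp
    then have "u = v" using zs unfolding zero_sum_def by (simp add: vec_mod2_add_eq_0_iff)
    then have "count Z u = 2" using uv by simp
    moreover have "count Z u \<le> 1" using sq unfolding squarefree_seq_def by blast
    ultimately show False by simp
  qed
  moreover have "size Z \<noteq> 0" using ne by simp
  ultimately show ?thesis using sz ev w by presburger
qed

lemma weight_sum_mset_ge: "\<forall>Z\<in>#F. 4 \<le> weight H Z \<Longrightarrow> 4 * size F \<le> weight H (sum_mset F)"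
  by (induct F) (auto simp: weight_union)

lemma has_disjoint_zs_weight:
  fixes H :: "(2 ^ 'n) set"
  assumes H: "subgroup_index2 H" and sq: "squarefree_seq B" and z: "0 \<notin># B"
    and d: "has_disjoint_zs B m"
  shows "4 * m \<le> weight H B"
proof -
  obtain F where F: "size F = m" "\<forall>A\<in>#F. A \<noteq> {#} \<and> zero_sum A" "sum_mset F \<subseteq># B"
    using d unfolding has_disjoint_zs_def by blast
  have "4 \<le> weight H Z" if "Z \<in># F" for Z
  proof -
    have "Z \<subseteq># B" using mset_subset_eq_sum_mset[OF that] F(3) by (rule subset_mset.order_trans)
    then show ?thesis
      using weight_zero_sum_ge_4[OF H] squarefree_seq_subset[OF sq] z F(2) that
      by (meson mset_subset_eqD)
  qed
  then have "4 * m \<le> weight H (sum_mset F)" using weight_sum_mset_ge F(1) by blast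
  also have "\<dots> \<le> weight H B" using weight_mono[OF F(3)] .
  finally show ?thesis .
qed

lemma size_filter_in_le_size:
  assumes "T \<subseteq># B" "\<forall>g\<in>#B - T. g \<notin> H"
  shows "size (filter_mset (\<lambda>g. g \<in> H) B) \<le> size T"
proof -
  have "count (filter_mset (\<lambda>g. g \<in> H) B) g \<le> count T g" for g
  proof (cases "g \<in> H")
    case True
    then have "\<not> count T g < count B g" using assms(2) by (auto simp: in_diff_count)
    then show ?thesis using True by simp
  qed simp
  then have "filter_mset (\<lambda>g. g \<in> H) B \<subseteq># T" by (rule mset_subset_eqI)
  then show ?thesis by (rule size_mset_mono)
qed

section \<open>Extremal sequences\<close>

definition near_coset :: "nat \<Rightarrow> 'a::{ab_group_add,finite} set \<Rightarrow> bool" where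
  "near_coset m S \<longleftrightarrow> (\<exists>H. subgroup_index2 H \<and> card (S \<inter> H) \<le> m)"

lemma coset_subset_translate_meets:
  fixes H :: "C2_5 set"
  assumes H: "subgroup_index2 H" and S: "S \<subseteq> UNIV - H" "card S \<ge> 9" and x: "x \<in> H"
  obtains c where "c \<in> S" "c + x \<in> S"
proof -
  have "S \<union> (\<lambda>c. c + x) ` S \<subseteq> UNIV - H"
    using S(1) subgroup_index2_add_iff[OF H] x by auto
  then have "card (S \<union> (\<lambda>c. c + x) ` S) \<le> 16"
    using subgroup_index2_card_le_coset[OF H] by blast
  moreover have "card ((\<lambda>c. c + x) ` S) = card S" by (simp add: card_image inj_on_def)
  ultimately have "S \<inter> (\<lambda>c. c + x) ` S \<noteq> {}"
    using S(2) card_Un_disjoint[of S "(\<lambda>c. c + x) ` S"] by auto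
  then obtain c where "c \<in> S" "c + x \<in> S" by blast
  then show ?thesis using that by blast
qed

lemma card_Diff_le_two_parts:
  fixes T H H' :: "'a::finite set"
  shows "card (T - H') \<le> card (T \<inter> H) + card ((T - H) - H')"
proof -
  have "card (T - H') \<le> card ((T \<inter> H) \<union> ((T - H) - H'))" by (rule card_mono) auto
  also have "\<dots> \<le> card (T \<inter> H) + card ((T - H) - H')" by (rule card_Un_le)
  finally show ?thesis .
qed

context
  fixes H H' :: "C2_5 set"
  assumes H: "subgroup_index2 H" and H': "subgroup_index2 H'" and ne: "H \<noteq> H'"
begin

text \<open>Translation by an element of \<open>H' - H\<close> swaps the two halves of \<open>UNIV - H'\<close>.\<close>
lemma two_subgroups_card_coset_Diff: "card ((UNIV - H) - H') = 8"
proof -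
  have "\<not> H' \<subseteq> H"
    using card_subset_eq[of H H'] subgroup_index2_card[OF H] subgroup_index2_card[OF H'] ne by auto
  then obtain u where u: "u \<in> H'" "u \<notin> H" by blast
  define X where "X = (UNIV - H) - H'"
  define Y where "Y = H - H'"
  have inj: "inj_on (\<lambda>x. x + u) A" for A by (simp add: inj_on_def)
  have "(\<lambda>x. x + u) ` X \<subseteq> Y" "(\<lambda>x. x + u) ` Y \<subseteq> X" unfolding X_def Y_def
    using subgroup_index2_add_iff[OF H] subgroup_index2_add_iff[OF H'] u by auto
  then have "card X \<le> card Y" "card Y \<le> card X" using card_inj_on_le[OF inj] by simp_all
  moreover have "X \<union> Y = UNIV - H'" "X \<inter> Y = {}" unfolding X_def Y_def by auto
  then have "card X + card Y = 16"
    using card_Un_disjoint[of X Y] subgroup_index2_card_coset[OF H'] by simp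
  ultimately show ?thesis unfolding X_def by simp
qed

lemma two_subgroups_sum_coset_Diff: "sum id ((UNIV - H) - H') = 0"
proof -
  define X where "X = (UNIV - H) - H'"
  have cX: "card X = 2 * 4" unfolding X_def using two_subgroups_card_coset_Diff by simp
  obtain N where "N \<subseteq> X" "card N = 2" using obtain_subset_with_card_n[of 2 X] cX by auto
  then obtain u v where uv: "u \<in> X" "v \<in> X" "u \<noteq> v" by (auto simp: card_2_iff)
  define d where "d = u + v"
  have d: "d \<noteq> 0" "d \<in> H" "d \<in> H'"
    using uv subgroup_index2_add_out_out[OF H] subgroup_index2_add_out_out[OF H']
    unfolding X_def d_def by (auto simp: vec_mod2_add_eq_0_iff)
  have "\<forall>x\<in>X. x + d \<in> X"
    using subgroup_index2_add_iff[OF H] subgroup_index2_add_iff[OF H'] d unfolding X_def by auto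
  then show ?thesis using sum_translation_closed[OF d(1) _ cX] unfolding X_def by simp
qed

lemma two_subgroups_card_Diff_le: "card (T - H') \<le> card (T \<inter> H) + 8"
proof -
  have "card ((T - H) - H') \<le> card ((UNIV - H) - H')" by (rule card_mono) auto
  then show ?thesis using card_Diff_le_two_parts[of T H' H] two_subgroups_card_coset_Diff by simp
qed

lemma two_subgroups_Diff_eq:
  assumes "card (T - H) \<le> 8" "card (T \<inter> H) + 8 \<le> card (T - H')"
  shows "T - H = (UNIV - H) - H'"
proof -
  have c8: "card ((T - H) - H') \<ge> 8" using card_Diff_le_two_parts[of T H' H] assms(2) by simp
  have "(T - H) - H' = T - H"
    by (rule card_subset_eq) (use c8 assms(1) card_mono[of "T - H" "(T - H) - H'"] in auto)
  moreover have "(T - H) - H' = (UNIV - H) - H'"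
    by (rule card_subset_eq) (use c8 two_subgroups_card_coset_Diff card_mono[of "(UNIV - H) - H'" "(T - H) - H'"] in auto)
  ultimately show ?thesis by simp
qed

end

lemma sumfree_or_zero_sum_triple:
  fixes S :: "(2 ^ 'n) set"
  assumes "0 \<notin> S"
  shows "sumfree S \<or> (\<exists>A\<subseteq>S. card A = 3 \<and> sum id A = 0)"
proof (cases "sumfree S")
  case False
  then have "\<not> (\<forall>x\<in>S. \<forall>y\<in>S. x \<noteq> y \<longrightarrow> x + y \<notin> S)" using assms by (simp add: sumfree_def)
  then obtain x y where xy: "x \<in> S" "y \<in> S" "x \<noteq> y" "x + y \<in> S" by blast
  then have "x \<noteq> 0" "y \<noteq> 0" using assms by auto
  then have "x + y \<noteq> x" "x + y \<noteq> y" by simp_all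
  then have "card {x, y, x + y} = 3" "sum id {x, y, x + y} = 0" using xy(3) by simp_all
  then show ?thesis using xy by (intro disjI2 exI[of _ "{x, y, x + y}"]) simp
qed simp

lemma sumfree_zero_sum_near_coset:
  fixes S :: "C2_5 set"
  assumes "sumfree S" "sum id S = 0" "card S \<ge> 10"
  shows "near_coset 0 S"
proof -
  obtain H where "subgroup_index2 H" "S \<subseteq> UNIV - H"
  proof (cases "card S = 10")
    case True
    then show ?thesis using sumfree_zero_sum_card10_in_coset assms that by blast
  next
    case False
    then show ?thesis using sumfree_in_coset assms that by force
  qed
  then have "S \<inter> H = {}" by blast
  then have "card (S \<inter> H) = 0" by simp
  then show ?thesis unfolding near_coset_def using \<open>subgroup_index2 H\<close> by auto
qed

text \<open>A zero-sum triple \<open>A\<close> meets \<open>H\<close> in 1 or 3 points; in the second case parity of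
  \<open>|S - H|\<close> leaves only the two possibilities below.\<close>
lemma zero_sum_triple_subgroup_cases:
  fixes S :: "C2_5 set"
  assumes H: "subgroup_index2 H" and A: "A \<subseteq> S" "card A = 3" "sum id A = 0"
    and S: "sum id S = 0" "card S = 3 * k + 7" and cH: "card ((S - A) \<inter> H) \<le> k - 2" and k: "2 \<le> k"
  shows "card (S \<inter> H) \<le> k - 1 \<or> (A \<subseteq> H \<and> card (S \<inter> H) = Suc k)"
proof -
  have even_out: "even (card (X - H))" if "sum id X = 0" for X :: "C2_5 set"
    using subgroup_index2_sum_iff[OF H, of X] that subgroup_index2_zero[OF H] by simp
  have "S \<inter> H = ((S - A) \<inter> H) \<union> (A \<inter> H)" using A(1) by blast
  then have split: "card (S \<inter> H) = card ((S - A) \<inter> H) + card (A \<inter> H)"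
    using card_Un_disjoint[of "(S - A) \<inter> H" "A \<inter> H"] by auto
  have cA: "card (A \<inter> H) + card (A - H) = 3" using card_Int_Diff[of A H] A(2) by simp
  show ?thesis
  proof (cases "card (A - H) = 0")
    case False
    obtain b where "card (A - H) = 2 * b" using even_out[OF A(3)] by (auto elim: evenE)
    then have "card (A - H) = 2" using False cA by presburger
    then have "card (S \<inter> H) \<le> k - 1" using split cH cA k by linarith
    then show ?thesis by blast
  next
    case True
    then have "A \<subseteq> H" "card (S \<inter> H) \<le> Suc k" using split cH cA k by auto
    moreover have "card (S \<inter> H) \<noteq> k"
    proof
      assume "card (S \<inter> H) = k"
      then have "card (S - H) = 2 * k + 7" using card_Int_Diff[of S H] S(2) by simp
      then show False using even_out[OF S(1)] by simp
    qed
    ultimately show ?thesis by (cases "card (S \<inter> H) \<le> k - 1") auto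
  qed
qed

lemma exists_zero_sum_triple_through:
  fixes S H :: "C2_5 set"
  assumes H: "subgroup_index2 H" and x: "x \<in> S" "x \<in> H" "x \<noteq> 0" and c: "card (S - H) \<ge> 9"
  obtains T where "T \<subseteq> S" "card T = 3" "sum id T = 0" "T \<inter> H = {x}"
proof -
  obtain c where c: "c \<in> S - H" "c + x \<in> S - H"
    using coset_subset_translate_meets[OF H, of "S - H" x] c x(2) by auto
  have "c \<noteq> x" "c + x \<noteq> x" "c + x \<noteq> c" using c x subgroup_index2_zero[OF H] by auto
  then show ?thesis using that[of "{x, c, c + x}"] c x by auto
qed

text \<open>Remove a zero-sum triple meeting \<open>H\<close> only in \<open>x\<close>. The induction hypothesis puts the rest,
  up to \<open>k - 3\<close> points, in the nonzero coset of some \<open>H'\<close>; this forces \<open>k = 3\<close> and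
  \<open>S - H = (UNIV - H) - H' \<union> (T - H)\<close>, whose sum is \<open>x \<noteq> 0\<close>.\<close>
lemma extremal_dense_subgroup_absurd:
  fixes S H :: "C2_5 set"
  assumes IH: "\<And>T :: C2_5 set. sum id T = 0 \<Longrightarrow> 0 \<notin> T \<Longrightarrow> card T = 3 * k + 1 \<Longrightarrow>
      \<not> has_disjoint_zs (mset_set T) k \<Longrightarrow> near_coset (k - 3) T"
    and k: "3 \<le> k"
    and S: "sum id S = 0" "0 \<notin> S" "card S = 3 * k + 4"
    and nd: "\<not> has_disjoint_zs (mset_set S) (Suc k)"
    and H: "subgroup_index2 H" and A: "A \<subseteq> S \<inter> H" "card A = 3" "sum id A = 0"
    and cSH: "card (S \<inter> H) = k"
  shows False
proof -
  have cC: "card (S - H) = 2 * k + 4" using card_Int_Diff[of S H] S(3) cSH by simp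
  obtain x where x: "x \<in> A" using A(2) by (metis card.empty ex_in_conv zero_neq_numeral)
  then have x: "x \<in> S" "x \<in> H" "x \<noteq> 0" using A(1) S(2) by auto
  obtain T where T: "T \<subseteq> S" "card T = 3" "sum id T = 0" "T \<inter> H = {x}"
    using exists_zero_sum_triple_through[OF H x] cC k by auto
  have "sum id (T \<inter> H) + sum id (T - H) = 0" using T(3) sum.Int_Diff[of T id H] by simp
  then have sTC: "sum id (T - H) = x" using T(4) by (simp add: vec_mod2_add_eq_0_iff)
  have cTC: "card (T - H) = 2" using card_Int_Diff[of T H] T(2,4) by simp
  define S' where "S' = S - T"
  have cS': "card S' = 3 * k + 1" unfolding S'_def using S(3) T by (simp add: card_Diff_subset)
  have "T \<noteq> {}" using T(2) by auto
  then have "\<not> has_disjoint_zs (mset_set S') k"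
    using has_disjoint_zs_mset_set_Suc[OF _ T(1) _ T(3)] nd unfolding S'_def by (meson finite)
  moreover have "sum id S' = 0" "0 \<notin> S'"
    using sum.subset_diff[of T S id] T S(1,2) unfolding S'_def by auto
  ultimately have "near_coset (k - 3) S'" using IH cS' by blast
  then obtain H' where H': "subgroup_index2 H'" "card (S' \<inter> H') \<le> k - 3"
    unfolding near_coset_def by blast
  have "S' \<inter> H = (S \<inter> H) - {x}" using T(4) unfolding S'_def by auto
  then have cS'H: "card (S' \<inter> H) = k - 1" using cSH x by simp
  have S'C: "S' - H = (S - H) - (T - H)" unfolding S'_def by auto
  moreover have "T - H \<subseteq> S - H" using T(1) by blast
  ultimately have cS'C: "card (S' - H) = 2 * k + 2" using cC cTC by (simp add: card_Diff_subset)
  have "H \<noteq> H'" using H'(2) cS'H k by auto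
  have out: "card (S' - H') \<ge> 2 * k + 4" using card_Int_Diff[of S' H'] cS' H'(2) k by simp
  then have k3: "k = 3" using two_subgroups_card_Diff_le[OF H H'(1) \<open>H \<noteq> H'\<close>, of S'] cS'H k by simp
  then have "S' - H = (UNIV - H) - H'"
    using two_subgroups_Diff_eq[OF H H'(1) \<open>H \<noteq> H'\<close>] cS'C cS'H out by simp
  then have "sum id (S - H) = x"
    using two_subgroups_sum_coset_Diff[OF H H'(1) \<open>H \<noteq> H'\<close>] sum.subset_diff[of "T - H" "S - H" id]
      T(1) S'C sTC by auto
  moreover have "S \<inter> H = A" using A cSH k3 by (metis card_subset_eq finite)
  ultimately have "sum id S = x" using sum.Int_Diff[of S id H] A(3) by simp
  then show False using S(1) x(3) by simp
qed

lemma near_coset_mono: "m \<le> n \<Longrightarrow> near_coset m S \<Longrightarrow> near_coset n S"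
  unfolding near_coset_def by (meson order_trans)

lemma extremal_set_near_coset:
  fixes S :: "C2_5 set"
  shows "2 \<le> k \<Longrightarrow> sum id S = 0 \<Longrightarrow> 0 \<notin> S \<Longrightarrow> card S = 3 * k + 4 \<Longrightarrow>
    \<not> has_disjoint_zs (mset_set S) (Suc k) \<Longrightarrow> near_coset (k - 2) S"
proof (induct k arbitrary: S rule: nat_induct_at_least)
  case base
  consider "sumfree S" | A where "A \<subseteq> S" "card A = 3" "sum id A = 0"
    using sumfree_or_zero_sum_triple[OF base(2)] by blast
  then show ?case
  proof cases
    case 1
    then show ?thesis using sumfree_zero_sum_near_coset base by simp
  next
    case 2
    then have "A \<noteq> {}" "sum id (S - A) = 0" "card (S - A) = 7"
      using sum.subset_diff[of A S id] base by (auto simp: card_Diff_subset)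
    then have "has_disjoint_zs (mset_set S) 3"
      using zero_sum_has_disjoint_zs_2[of "mset_set (S - A)"] has_disjoint_zs_mset_set_Suc[OF _ 2(1)] 2
      by (simp add: zero_sum_mset_set_iff numeral_3_eq_3 numeral_2_eq_2)
    then show ?thesis using base(4) by (simp add: numeral_3_eq_3)
  qed
next
  case (Suc k)
  consider "sumfree S" | A where "A \<subseteq> S" "card A = 3" "sum id A = 0"
    using sumfree_or_zero_sum_triple[OF Suc.prems(2)] by blast
  then show ?case
  proof cases
    case 1
    then have "near_coset 0 S" using sumfree_zero_sum_near_coset Suc.prems Suc.hyps(1) by simp
    then show ?thesis using near_coset_mono by blast
  next
    case 2
    then have "A \<noteq> {}" "sum id (S - A) = 0" "0 \<notin> S - A" "card (S - A) = 3 * k + 4"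
      using sum.subset_diff[of A S id] Suc.prems by (auto simp: card_Diff_subset)
    moreover have "\<not> has_disjoint_zs (mset_set (S - A)) (Suc k)"
      using has_disjoint_zs_mset_set_Suc[OF _ 2(1)] 2(3) \<open>A \<noteq> {}\<close> Suc.prems(4) by (meson finite)
    ultimately obtain H where H: "subgroup_index2 H" "card ((S - A) \<inter> H) \<le> k - 2"
      using Suc.hyps(2) unfolding near_coset_def by blast
    have "card (S \<inter> H) \<le> k - 1 \<or> (A \<subseteq> H \<and> card (S \<inter> H) = Suc k)"
      using zero_sum_triple_subgroup_cases[OF H(1) 2 _ _ H(2)] Suc.prems Suc.hyps(1) by simp
    moreover have False if "A \<subseteq> H" "card (S \<inter> H) = Suc k"
      using extremal_dense_subgroup_absurd[of "Suc k" S H A] Suc.hyps Suc.prems 2 H(1) that by auto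
    ultimately show ?thesis using H(1) unfolding near_coset_def by auto
  qed
qed

section \<open>The Davenport constants and the characterization\<close>

lemma extremal_structure:
  fixes B :: "C2_5 multiset"
  assumes k: "2 \<le> k" "k \<le> 5" and zs: "zero_sum B" and sz: "size B = 3 * k + 4"
    and nd: "\<not> has_disjoint_zs B (Suc k)"
  shows "squarefree_seq B" "0 \<notin># B" "near_coset (k - 2) (set_mset B)"
proof -
  have sq_z: "squarefree_seq B \<and> 0 \<notin># B"
  proof (rule ccontr)
    assume "\<not> (squarefree_seq B \<and> 0 \<notin># B)"
    then obtain A where A: "A \<subseteq># B" "A \<noteq> {#}" "zero_sum A" "size A \<le> 2"
      using exists_zs_size_le2[of B] by blast
    then have "3 * (k - 1) + 5 \<le> size (B - A)" using sz k by (simp add: size_Diff_submset)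
    then have "has_disjoint_zs (B - A) (Suc (k - 1))"
      using zero_sum_has_disjoint_zs[of "k - 1" "B - A"] zero_sum_diff[OF zs A(1,3)] k by simp
    then show False using has_disjoint_zs_Suc[OF A(1-3)] nd k by simp
  qed
  then show "squarefree_seq B" "0 \<notin># B" by simp_all
  have B: "mset_set (set_mset B) = B" using sq_z squarefree_seq_mset_set_set_mset by blast
  show "near_coset (k - 2) (set_mset B)"
  proof (rule extremal_set_near_coset)
    show "sum id (set_mset B) = 0"
      using zs zero_sum_mset_set_iff[of "set_mset B"] by (simp add: B)
    show "card (set_mset B) = 3 * k + 4" using sz arg_cong[OF B, of size] by simp
    show "\<not> has_disjoint_zs (mset_set (set_mset B)) (Suc k)" using nd by (simp add: B)
  qed (use k sq_z in simp_all)
qed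

lemma exists_submset_containing_filter:
  assumes "size (filter_mset P B) \<le> m" "m \<le> size B"
  shows "\<exists>T. T \<subseteq># B \<and> size T = m \<and> (\<forall>g\<in>#B - T. \<not> P g)"
proof -
  define R where "R = filter_mset (\<lambda>g. \<not> P g) B"
  have B: "B = filter_mset P B + R" unfolding R_def by (rule multiset_partition)
  then have "m - size (filter_mset P B) \<le> size R" using assms(2) by (metis add_diff_cancel_left'
        diff_le_mono size_union)
  then obtain R' where R': "R' \<subseteq># R" "size R' = m - size (filter_mset P B)"
    using exists_submset_size by blast
  define T where "T = filter_mset P B + R'"
  have "T \<subseteq># B" unfolding T_def using R'(1) B by (metis subset_mset.add_left_mono)
  moreover have "size T = m" unfolding T_def using R'(2) assms(1) by simp
  moreover have "B - T = R - R'" unfolding T_def using B by (metis add_diff_cancel_left'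
        diff_diff_add_mset)
  then have "\<forall>g\<in>#B - T. \<not> P g" unfolding R_def by (auto dest: in_diffD)
  ultimately show ?thesis by blast
qed

lemma exists_extremal_example:
  assumes "2 \<le> k" "k \<le> 5"
  shows "\<exists>(E :: C2_5 set) H. subgroup_index2 H \<and> sum id E = 0 \<and> 0 \<notin> E \<and>
    card E = 3 * k + 4 \<and> card (E \<inter> H) = k - 2"
  using assms(2,1)
proof (induct k rule: inc_induct)
  case base
  obtain c :: C2_5 where c: "c \<noteq> 0" by (metis zero_neq_one)
  define H where "H = hyperplane c"
  have H: "subgroup_index2 H" unfolding H_def using hyperplane_subgroup_index2[OF c] .
  have "card (H - {0}) = 15" using subgroup_index2_card[OF H] subgroup_index2_zero[OF H] by simp
  then obtain N where N: "N \<subseteq> H - {0}" "card N = 2"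
    using obtain_subset_with_card_n[of 2 "H - {0}"] by auto
  then obtain t1 t2 where t: "N = {t1, t2}" "t1 \<noteq> t2" by (meson card_2_iff)
  define T where "T = {t1, t2, t1 + t2}"
  have "t1 + t2 \<in> H" "t1 + t2 \<noteq> 0" "t1 + t2 \<noteq> t1" "t1 + t2 \<noteq> t2"
    using subgroup_index2_add[OF H] N t by (auto simp: vec_mod2_add_eq_0_iff)
  then have T: "T \<subseteq> H" "0 \<notin> T" "card T = 3" "sum id T = 0"
    using N t unfolding T_def by auto
  define E where "E = (UNIV - H) \<union> T"
  have "card E = 19" "E \<inter> H = T" "0 \<notin> E" "sum id E = 0"
    using card_Un_disjoint[of "UNIV - H" T] sum.union_disjoint[of "UNIV - H" T id] T
      subgroup_index2_card_coset[OF H] subgroup_index2_coset_sum[OF H] subgroup_index2_zero[OF H]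
    unfolding E_def by auto
  then show ?case using H T(3) by auto
next
  case (step k)
  have "2 \<le> Suc k" using step.prems by simp
  then obtain E H :: "C2_5 set" where H: "subgroup_index2 H" and E: "sum id E = 0" "0 \<notin> E"
    "card E = 3 * Suc k + 4" "card (E \<inter> H) = Suc k - 2" using step.hyps(3) by blast
  have "E \<inter> H \<noteq> {}"
  proof
    assume "E \<inter> H = {}"
    then show False using E(4) step.prems by simp
  qed
  then obtain x where x: "x \<in> E" "x \<in> H" by blast
  have "card (E - H) \<ge> 9" using card_Int_Diff[of E H] E(3,4) step.prems by simp
  then obtain T where T: "T \<subseteq> E" "card T = 3" "sum id T = 0" "T \<inter> H = {x}"
    using exists_zero_sum_triple_through[OF H x] E(2) x by auto
  have "card (E - T) = 3 * k + 4" using E(3) T(1,2) by (simp add: card_Diff_subset)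
  moreover have "(E - T) \<inter> H = (E \<inter> H) - {x}" using T(4) by auto
  then have "card ((E - T) \<inter> H) = k - 2" using E(4) x by simp
  moreover have "sum id (E - T) = 0" "0 \<notin> E - T" using sum.subset_diff[of T E id] T E by auto
  ultimately show ?case using H by blast
qed

lemma Davenport_k_C2_5:
  assumes "2 \<le> k" "k \<le> 5"
  shows "Davenport_k TYPE(C2_5) k = 3 * k + 4"
  unfolding Davenport_k_def
proof (rule Least_equality)
  show "\<forall>S :: C2_5 multiset. 3 * k + 4 \<le> size S \<longrightarrow> has_disjoint_zs S k"
    using has_disjoint_zs_if_size[OF assms(2)] by blast
next
  fix l assume l: "\<forall>S :: C2_5 multiset. l \<le> size S \<longrightarrow> has_disjoint_zs S k"
  obtain E H :: "C2_5 set" where H: "subgroup_index2 H" and E: "sum id E = 0" "0 \<notin> E"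
    "card E = 3 * k + 4" "card (E \<inter> H) = k - 2" using exists_extremal_example[OF assms] by blast
  define B where "B = mset_set E"
  have "filter_mset (\<lambda>g. g \<in> H) B = mset_set (E \<inter> H)"
    unfolding B_def by (simp add: filter_mset_mset_set Int_def)
  then have w: "weight H B = 4 * k + 2" unfolding weight_def using E(3,4) assms(1) by (simp add: B_def)
  have sqB: "squarefree_seq B" unfolding B_def by (rule squarefree_seq_mset_set)
  have zB: "0 \<notin># B" unfolding B_def using E(2) by simp
  have nd: "\<not> has_disjoint_zs B (Suc k)"
  proof
    assume "has_disjoint_zs B (Suc k)"
    then have "4 * Suc k \<le> weight H B" by (rule has_disjoint_zs_weight[OF H sqB zB])
    then show False using w by simp
  qed
  have "E \<noteq> {}" using E(3) by auto
  then obtain g where g: "g \<in># B" unfolding B_def by auto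
  have "zero_sum B" unfolding B_def using E(1) by (simp add: zero_sum_mset_set_iff)
  then have nd': "\<not> has_disjoint_zs (B - {#g#}) k" using has_disjoint_zs_add_term g nd by blast
  have "size (B - {#g#}) = 3 * k + 3" using size_Diff_singleton[OF g] E(3) unfolding B_def by simp
  then have "\<not> l \<le> 3 * k + 3" using l nd' by metis
  then show "3 * k + 4 \<le> l" by simp
qed

theorem proposition7p11:
  fixes B :: "C2_5 multiset" and k :: nat
  assumes "zero_sum B" and "2 \<le> k" and "k \<le> 5"
  shows "(Max (lengths B) = k \<and> size B = Davenport_k TYPE(C2_5) k) \<longleftrightarrow>
         (size B = 4 + 3 * k \<and> squarefree_seq B \<and> (0::C2_5) \<notin># B \<and>
          (\<exists>T H. T \<subseteq># B \<and> size T = k - 2 \<and> subgroup_index2 H \<and>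
                 (\<forall>g \<in># B - T. g \<in> UNIV - H)))"
proof -
  have max_iff: "Max (lengths B) = k \<longleftrightarrow> \<not> has_disjoint_zs B (Suc k)" if "size B = 3 * k + 4"
    using Max_lengths_eq_iff[OF assms(1)] has_disjoint_zs_if_size[OF assms(3)] that by simp
  show ?thesis
  proof
    assume L: "Max (lengths B) = k \<and> size B = Davenport_k TYPE(C2_5) k"
    then have sz: "size B = 3 * k + 4" using Davenport_k_C2_5[OF assms(2,3)] by simp
    then have nd: "\<not> has_disjoint_zs B (Suc k)" using max_iff L by simp
    note extremal = extremal_structure[OF assms(2,3,1) sz nd]
    then obtain H where H: "subgroup_index2 H" "card (set_mset B \<inter> H) \<le> k - 2"
      unfolding near_coset_def by blast
    have "size (filter_mset (\<lambda>g. g \<in> H) B) = card (set_mset B \<inter> H)"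
      using squarefree_seq_mset_set_set_mset[OF extremal(1)]
      by (metis filter_mset_mset_set finite_set_mset Int_def size_mset_set)
    then have "size (filter_mset (\<lambda>g. g \<in> H) B) \<le> k - 2" "k - 2 \<le> size B" using H(2) sz by simp_all
    then obtain T where "T \<subseteq># B" "size T = k - 2" "\<forall>g\<in>#B - T. g \<notin> H"
      using exists_submset_containing_filter by blast
    then show "size B = 4 + 3 * k \<and> squarefree_seq B \<and> 0 \<notin># B \<and>
        (\<exists>T H. T \<subseteq># B \<and> size T = k - 2 \<and> subgroup_index2 H \<and> (\<forall>g\<in>#B - T. g \<in> UNIV - H))"
      using sz extremal H(1) by auto
  next
    assume R: "size B = 4 + 3 * k \<and> squarefree_seq B \<and> 0 \<notin># B \<and>
        (\<exists>T H. T \<subseteq># B \<and> size T = k - 2 \<and> subgroup_index2 H \<and> (\<forall>g\<in>#B - T. g \<in> UNIV - H))"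
    then obtain T H where T: "T \<subseteq># B" "size T = k - 2" and H: "subgroup_index2 H"
      and out: "\<forall>g\<in>#B - T. g \<in> UNIV - H" by blast
    have sz: "size B = 3 * k + 4" using R by simp
    have "size (filter_mset (\<lambda>g. g \<in> H) B) \<le> k - 2"
      using size_filter_in_le_size[OF T(1)] out T(2) by auto
    then have "weight H B < 4 * Suc k" unfolding weight_def using sz assms(2) by simp
    then have "\<not> has_disjoint_zs B (Suc k)" using has_disjoint_zs_weight[OF H] R by fastforce
    then show "Max (lengths B) = k \<and> size B = Davenport_k TYPE(C2_5) k"
      using max_iff sz Davenport_k_C2_5[OF assms(2,3)] by simp
  qed
qed

end
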